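(* Given a sequence of positive integers $r_n$ and a constant prime $p$, it is possible to find an irreducible polynomial of degree $r_n$ in $GF(p)[\xi]$ in space $3 r_n + O(\log r_n)$.
   Context: Polynomials over $GF(p)$ are represented by their coefficient vectors; space is measured on a deterministic space-bounded Turing machine. *)

theory Defs
  imports "Berlekamp_Zassenhaus.Finite_Field" "HOL-Computational_Algebra.Polynomial"
begin

text \<open>A deterministic multi-tape Turing machine with a read-only binary input tape,
  k work tapes over the alphabet GF(p) plus a blank (None), and a write-only
  outp tape on which elements of GF(p) are appended.  Space = total number of
  work-tape cells visited (input and outp tapes are not counted).
  State 0 is the start state, state 1 the (unique) halting state.\<close>

datatype move = MLeft | MStay | MRight

type_synonym 'p wsym = "'p mod_ring option"

record 'p tm =
  ntapes :: nat
  nstates :: nat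
  delta :: "nat \<Rightarrow> bool option \<Rightarrow> 'p wsym list
              \<Rightarrow> nat \<times> move \<times> 'p wsym list \<times> move list \<times> 'p mod_ring option"

definition wf_tm :: "'p tm \<Rightarrow> bool" where
  "wf_tm M \<longleftrightarrow> 2 \<le> nstates M \<and>
     (\<forall>q a rs. q < nstates M \<longrightarrow> length rs = ntapes M \<longrightarrow>
        (case delta M q a rs of (q', mi, ws, ms, ot) \<Rightarrow>
           q' < nstates M \<and> length ws = ntapes M \<and> length ms = ntapes M))"

record 'p config =
  cstate :: nat
  ipos :: nat
  heads :: "nat list"
  tapes :: "(nat \<Rightarrow> 'p wsym) list"
  outp :: "'p mod_ring list"

fun move_head :: "move \<Rightarrow> nat \<Rightarrow> nat" where
  "move_head MLeft h = h - 1"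
| "move_head MStay h = h"
| "move_head MRight h = Suc h"

definition init_config :: "'p tm \<Rightarrow> 'p config" where
  "init_config M = \<lparr>cstate = 0, ipos = 0, heads = replicate (ntapes M) 0,
     tapes = replicate (ntapes M) (\<lambda>_. None), outp = []\<rparr>"

definition input_sym :: "bool list \<Rightarrow> nat \<Rightarrow> bool option" where
  "input_sym x i = (if i < length x then Some (x ! i) else None)"

definition step :: "'p tm \<Rightarrow> bool list \<Rightarrow> 'p config \<Rightarrow> 'p config" where
  "step M x c =
    (if cstate c = 1 then c else
     (case delta M (cstate c) (input_sym x (ipos c)) (map2 (\<lambda>t h. t h) (tapes c) (heads c)) of
       (q', mi, ws, ms, ot) \<Rightarrow>
         \<lparr>cstate = q', ipos = move_head mi (ipos c),
          heads = map2 move_head ms (heads c),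
          tapes = map2 (\<lambda>(t, h) w. t(h := w)) (zip (tapes c) (heads c)) ws,
          outp = outp c @ (case ot of None \<Rightarrow> [] | Some a \<Rightarrow> [a])\<rparr>))"

definition run :: "'p tm \<Rightarrow> bool list \<Rightarrow> nat \<Rightarrow> 'p config" where
  "run M x t = (step M x ^^ t) (init_config M)"

definition space_used :: "'p tm \<Rightarrow> bool list \<Rightarrow> nat \<Rightarrow> nat" where
  "space_used M x t = (\<Sum>i<ntapes M. Max {Suc (heads (run M x t') ! i) | t'. t' \<le> t})"

definition computes_in_space :: "'p tm \<Rightarrow> bool list \<Rightarrow> 'p mod_ring list \<Rightarrow> real \<Rightarrow> bool" where
  "computes_in_space M x ys s \<longleftrightarrow>
     (\<exists>t. cstate (run M x t) = 1 \<and> outp (run M x t) = ys \<and> real (space_used M x t) \<le> s)"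

fun nat_bits :: "nat \<Rightarrow> bool list" where
  "nat_bits n = (if n = 0 then [] else odd n # nat_bits (n div 2))"

end

theory Submission
  imports Defs "Berlekamp_Zassenhaus.Distinct_Degree_Factorization"
begin

(* The machine enumerates the monic polynomials f of degree R over GF(p) and, for each of them,
   tries every monic g with 0 < deg g < R as a divisor; it prints the first f without a divisor.
   Such an f exists: X^(p^R) - X is square-free and all its irreducible factors have degrees
   dividing R, so if none had degree R it would divide the product of the X^(p^d) - X for d < R,
   which has smaller degree. Only f, g and the remainder of f modulo g (computed by Horner's rule,
   one coefficient of f at a time) are stored, on three tapes of R + O(1) cells; R is read from
   the binary input, which serves as a counter on a fourth tape of O(log R) cells. *)

section \<open>Irreducible polynomials of every degree over GF(p)\<close>

lemma dvd_frobenius_power_diff: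
  fixes f g :: "'p::prime_card mod_ring poly"
  assumes "f dvd monom 1 1 ^ CARD('p) ^ a - monom 1 1"
  shows "f dvd g ^ CARD('p) ^ a - g"
proof (induction g)
  case 0
  then show ?case by (simp add: zero_power)
next
  case (pCons c g)
  let ?X = "monom 1 1 :: 'p mod_ring poly" and ?q = "CARD('p) ^ a"
  have g: "pCons c g = [:c:] + ?X * g" by (simp add: monom_Suc pCons_one)
  have "(pCons c g) ^ ?q = [:c:] + ?X ^ ?q * g ^ ?q"
    unfolding g add_power_prime_poly_mod_ring fermat_theorem_power_poly power_mult_distrib ..
  then have "(pCons c g) ^ ?q - pCons c g = ?X ^ ?q * (g ^ ?q - g) + (?X ^ ?q - ?X) * g"
    unfolding g by (simp add: algebra_simps)
  then show ?case using pCons.IH assms by (simp add: dvd_add dvd_mult dvd_mult2)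
qed

lemma dvd_X_frobenius_diff_sub:
  fixes f :: "'p::prime_card mod_ring poly"
  assumes "f dvd monom 1 1 ^ CARD('p) ^ a - monom 1 1"
    and "f dvd monom 1 1 ^ CARD('p) ^ (a + b) - monom 1 1"
  shows "f dvd monom 1 1 ^ CARD('p) ^ b - monom 1 1"
proof -
  let ?X = "monom 1 1 :: 'p mod_ring poly"
  have "?X ^ CARD('p) ^ (a + b) = (?X ^ CARD('p) ^ b) ^ CARD('p) ^ a"
    by (metis power_add power_mult mult.commute)
  then have "?X ^ CARD('p) ^ b - ?X = (?X ^ CARD('p) ^ (a + b) - ?X)
      - ((?X ^ CARD('p) ^ b) ^ CARD('p) ^ a - ?X ^ CARD('p) ^ b)"
    by simp
  then show ?thesis using dvd_frobenius_power_diff[OF assms(1)] assms(2) by (metis dvd_diff)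
qed

lemma dvd_X_frobenius_diff_mod:
  fixes f :: "'p::prime_card mod_ring poly"
  assumes "f dvd monom 1 1 ^ CARD('p) ^ a - monom 1 1"
    and "f dvd monom 1 1 ^ CARD('p) ^ b - monom 1 1"
  shows "f dvd monom 1 1 ^ CARD('p) ^ (b mod a) - monom 1 1"
  using assms(2)
proof (induction b rule: less_induct)
  case (less b)
  show ?case
  proof (cases "b < a \<or> a = 0")
    case True
    then show ?thesis using less.prems by auto
  next
    case False
    then have "f dvd monom 1 1 ^ CARD('p) ^ (b - a) - monom 1 1"
      using dvd_X_frobenius_diff_sub[OF assms(1), of "b - a"] less.prems by simp
    with less.IH[of "b - a"] False show ?thesis by (simp add: le_mod_geq)
  qed
qed

lemma dvd_X_frobenius_diff_gcd:
  fixes f :: "'p::prime_card mod_ring poly"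
  assumes "f dvd monom 1 1 ^ CARD('p) ^ a - monom 1 1"
    and "f dvd monom 1 1 ^ CARD('p) ^ b - monom 1 1"
  shows "f dvd monom 1 1 ^ CARD('p) ^ gcd a b - monom 1 1"
  using assms
proof (induction a b rule: gcd_nat_induct)
  case (step m n)
  then show ?case using dvd_X_frobenius_diff_mod[OF step(4) step(3)] by (simp add: gcd_non_0_nat)
qed simp

lemma irreducible_dvd_X_frobenius_diff_imp_degree_dvd:
  fixes f :: "'p::prime_card mod_ring poly"
  assumes irr: "irreducible f" and dvd: "f dvd monom 1 1 ^ CARD('p) ^ n - monom 1 1" and "n > 0"
  shows "degree f dvd n"
proof -
  have "degree f > 0" using irr by (rule irreducible_degree_field)
  have "f dvd monom 1 1 ^ CARD('p) ^ gcd (degree f) n - monom 1 1"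
    using dvd_X_frobenius_diff_gcd[OF degree_divisor1[OF irr refl] dvd] .
  moreover have "1 \<le> gcd (degree f) n" "gcd (degree f) n \<le> degree f"
    using \<open>n > 0\<close> \<open>degree f > 0\<close> by (simp_all add: Suc_le_eq)
  ultimately have "gcd (degree f) n = degree f"
    using degree_divisor2[OF irr refl, of "gcd (degree f) n"] by linarith
  then show ?thesis by (metis gcd_dvd2)
qed

lemma degree_X_frobenius_diff:
  assumes "n > 0"
  shows "degree (monom 1 1 ^ CARD('p) ^ n - monom 1 1 :: 'p::prime_card mod_ring poly) = CARD('p) ^ n"
proof -
  have "CARD('p) ^ n > CARD('p) ^ 0"
    using assms nontriv[where 'a='p] by (intro power_strict_increasing) auto
  then show ?thesis
    using degree_add_eq_left[of "- monom 1 1" "monom (1::'p mod_ring) (CARD('p) ^ n)"]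
    by (simp add: monom_power degree_monom_eq)
qed

lemma square_free_X_frobenius_diff:
  assumes "n > 0"
  shows "square_free (monom 1 1 ^ CARD('p) ^ n - monom 1 1 :: 'p::prime_card mod_ring poly)"
proof (rule separable_imp_square_free)
  have "(of_nat (CARD('p) ^ n) :: 'p mod_ring) = 0" using assms by simp
  then have "pderiv (monom 1 1 ^ CARD('p) ^ n - monom 1 1 :: 'p mod_ring poly) = -1"
    by (simp add: monom_power pderiv_diff pderiv_monom one_poly_def monom_0)
  then show "separable (monom 1 1 ^ CARD('p) ^ n - monom 1 1 :: 'p mod_ring poly)"
    unfolding separable_def by simp
qed

lemma sum_power_less_power: "(q::nat) \<ge> 2 \<Longrightarrow> (\<Sum>i<n. q ^ i) < q ^ n"
proof (induction n)
  case (Suc n)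
  have "q ^ n + q ^ n \<le> q * q ^ n" using mult_le_mono1[OF Suc.prems] by (simp only: mult_2)
  then show ?case using Suc by simp
qed simp

lemma X_frobenius_diff_nonzero:
  assumes "n > 0"
  shows "monom 1 1 ^ CARD('p) ^ n - monom 1 1 \<noteq> (0 :: 'p::prime_card mod_ring poly)"
proof
  assume "monom 1 1 ^ CARD('p) ^ n - monom 1 1 = (0 :: 'p mod_ring poly)"
  then show False using degree_X_frobenius_diff[OF assms, where 'p='p] by simp
qed

lemma X_frobenius_diff_dvd_prod:
  assumes n: "n > 0" and none: "\<nexists>f :: 'p::prime_card mod_ring poly. irreducible f \<and> degree f = n"
  shows "monom 1 1 ^ CARD('p) ^ n - monom 1 1
    dvd (\<Prod>d\<in>{1..<n}. monom 1 1 ^ CARD('p) ^ d - monom 1 1 :: 'p mod_ring poly)"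
proof (rule multiplicity_le_imp_dvd)
  let ?F = "\<lambda>d. monom 1 1 ^ CARD('p) ^ d - monom 1 1 :: 'p mod_ring poly"
  let ?B = "\<Prod>d\<in>{1..<n}. ?F d"
  show "?F n \<noteq> 0" using n by (rule X_frobenius_diff_nonzero)
  have "?B \<noteq> 0" using X_frobenius_diff_nonzero[where 'p='p] by auto
  fix p :: "'p mod_ring poly" assume p: "prime p"
  show "multiplicity p (?F n) \<le> multiplicity p ?B"
  proof (cases "p dvd ?F n")
    case False
    then show ?thesis by (simp add: not_dvd_imp_multiplicity_0)
  next
    case True
    have irr: "irreducible p" using p by (intro prime_elem_imp_irreducible prime_imp_prime_elem)
    then have "degree p > 0" by (rule irreducible_degree_field)
    have "multiplicity p (?F n) \<le> 1"
    proof (rule ccontr)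
      assume "\<not> ?thesis"
      then have "p ^ 2 dvd p ^ multiplicity p (?F n)" by (intro le_imp_power_dvd) simp
      then have "p * p dvd ?F n" by (metis multiplicity_dvd dvd_trans power2_eq_square)
      with square_free_X_frobenius_diff[OF n] \<open>degree p > 0\<close> show False
        unfolding square_free_def by auto
    qed
    moreover have "degree p dvd n"
      using irreducible_dvd_X_frobenius_diff_imp_degree_dvd[OF irr True n] .
    then have "degree p \<le> n" using n by (rule dvd_imp_le)
    then have "degree p \<in> {1..<n}"
      using none irr \<open>degree p > 0\<close> by (auto simp: order.order_iff_strict)
    then have "?F (degree p) dvd ?B" by (intro dvd_prodI) simp_all
    then have "p dvd ?B" using degree_divisor1[OF irr refl] by (rule dvd_trans[rotated])
    then have "multiplicity p ?B > 0"
      using \<open>?B \<noteq> 0\<close> prime_imp_prime_elem[OF p] by (simp add: prime_multiplicity_gt_zero_iff)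
    ultimately show ?thesis by linarith
  qed
qed

theorem exists_irreducible_of_degree:
  assumes n: "n > 0"
  shows "\<exists>f :: 'p::prime_card mod_ring poly. irreducible f \<and> degree f = n"
proof (rule ccontr)
  let ?F = "\<lambda>d. monom 1 1 ^ CARD('p) ^ d - monom 1 1 :: 'p mod_ring poly"
  assume "\<not> ?thesis"
  then have "?F n dvd (\<Prod>d\<in>{1..<n}. ?F d)" using n by (intro X_frobenius_diff_dvd_prod) auto
  then have "degree (?F n) \<le> degree (\<Prod>d\<in>{1..<n}. ?F d)"
    using X_frobenius_diff_nonzero[where 'p='p] by (intro dvd_imp_degree_le) auto
  also have "\<dots> = (\<Sum>d\<in>{1..<n}. CARD('p) ^ d)"
    using X_frobenius_diff_nonzero[where 'p='p] degree_X_frobenius_diff[where 'p='p]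
    by (simp add: degree_prod_eq_sum_degree)
  also have "\<dots> \<le> (\<Sum>d<n. CARD('p) ^ d)" by (rule sum_mono2) auto
  also have "\<dots> < CARD('p) ^ n" using nontriv[where 'a='p] by (intro sum_power_less_power) simp
  finally show False using degree_X_frobenius_diff[OF n, where 'p='p] by simp
qed

section \<open>Monic polynomials and trial division\<close>

definition monic_poly :: "'a::comm_ring_1 list \<Rightarrow> 'a poly" where
  "monic_poly cs = Poly (cs @ [1])"

lemma coeff_monic_poly:
  "coeff (monic_poly cs) n = (if n < length cs then cs ! n else if n = length cs then 1 else 0)"
  unfolding monic_poly_def by (simp add: nth_default_def nth_append)

lemma degree_monic_poly [simp]: "degree (monic_poly cs) = length cs"
  by (rule antisym) (auto intro: degree_le le_degree simp: coeff_monic_poly)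

lemma monic_poly_nonzero [simp]: "monic_poly cs \<noteq> 0"
  using coeff_monic_poly[of cs "length cs"] by auto

lemma coeffs_monic_poly: "coeffs (monic_poly cs) = cs @ [1]"
  unfolding monic_poly_def by simp

lemma monic_poly_butlast_coeffs:
  assumes "lead_coeff f = 1"
  shows "monic_poly (butlast (coeffs f)) = f" "length (butlast (coeffs f)) = degree f"
proof -
  have "f \<noteq> 0" using assms by auto
  then have "butlast (coeffs f) @ [1] = coeffs f"
    using append_butlast_last_id[of "coeffs f"] last_coeffs_eq_coeff_degree[of f] assms by simp
  then show "monic_poly (butlast (coeffs f)) = f" unfolding monic_poly_def by simp
  show "length (butlast (coeffs f)) = degree f" using \<open>f \<noteq> 0\<close> by (simp add: length_coeffs_degree)
qed

lemma exists_irreducible_monic_poly: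
  assumes "n > 0"
  obtains cs :: "'p::prime_card mod_ring list" where "length cs = n" "irreducible (monic_poly cs)"
proof -
  obtain f :: "'p mod_ring poly" where f: "irreducible f" "degree f = n"
    using exists_irreducible_of_degree[OF assms] by blast
  then have "f \<noteq> 0" by auto
  then have "lead_coeff (normalize f) = 1" by (rule monic_normalize)
  from monic_poly_butlast_coeffs[OF this] f show ?thesis
    by (intro that[of "butlast (coeffs (normalize f))"]) (simp_all add: degree_normalize)
qed

lemma irreducible_monic_poly_not_dvd:
  fixes cs :: "'a::field list"
  assumes "irreducible (monic_poly cs)" and "1 \<le> length ds" and "length ds < length cs"
  shows "\<not> monic_poly ds dvd monic_poly cs"
proof
  assume "monic_poly ds dvd monic_poly cs"
  then obtain h where h: "monic_poly cs = monic_poly ds * h" by (elim dvdE)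
  then have "h \<noteq> 0" by auto
  from irreducibleD[OF assms(1) h] show False
  proof
    assume "is_unit (monic_poly ds)"
    then show False using assms(2) by (simp add: is_unit_iff_degree)
  next
    assume "is_unit h"
    then have "degree (monic_poly cs) = degree (monic_poly ds)"
      using h \<open>h \<noteq> 0\<close> by (simp add: is_unit_iff_degree degree_mult_eq)
    then show False using assms(3) by simp
  qed
qed

lemma not_irreducible_monic_poly_dvd:
  fixes cs :: "'a::field_gcd list"
  assumes "\<not> irreducible (monic_poly cs)" and "1 \<le> length cs"
  obtains ds where "1 \<le> length ds" "length ds < length cs" "monic_poly ds dvd monic_poly cs"
proof -
  let ?f = "monic_poly cs"
  have "\<not> is_unit ?f" using assms(2) by (auto simp: is_unit_iff_degree)
  then obtain a b where ab: "?f = a * b" "\<not> is_unit a" "\<not> is_unit b"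
    using assms(1) unfolding irreducible_def by auto
  then have "a \<noteq> 0" "b \<noteq> 0" by auto
  then have "degree a \<ge> 1" "degree b \<ge> 1" "degree ?f = degree a + degree b"
    using ab by (auto simp: is_unit_iff_degree degree_mult_eq)
  moreover have "normalize a dvd ?f" using ab(1) by simp
  ultimately show ?thesis
    using that[of "butlast (coeffs (normalize a))"] monic_poly_butlast_coeffs[of "normalize a"]
      monic_normalize[OF \<open>a \<noteq> 0\<close>] by (simp add: degree_normalize)
qed

text \<open>One step of computing the remainder modulo the monic polynomial \<open>g = monic_poly gs\<close>
  by Horner's rule: the current remainder \<open>r\<close> (of degree \<open><\<close> \<open>deg g\<close>) becomes the remainder of
  \<open>X r + a\<close>, obtained by subtracting \<open>c g\<close> with \<open>c\<close> the top coefficient of \<open>r\<close>.\<close>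

definition horner_step :: "'a::comm_ring_1 \<Rightarrow> 'a \<Rightarrow> 'a list \<Rightarrow> 'a list \<Rightarrow> 'a list" where
  "horner_step c a rs gs = map2 (\<lambda>r g. r - c * g) (a # rs) gs"

lemma length_horner_step [simp]: "length rs = length gs \<Longrightarrow> length (horner_step c a rs gs) = length gs"
  unfolding horner_step_def by simp

lemma nth_horner_step:
  "length rs = length gs \<Longrightarrow> j < length gs \<Longrightarrow> horner_step c a rs gs ! j = (a # rs) ! j - c * gs ! j"
  unfolding horner_step_def by simp

lemma Poly_horner_step:
  assumes "length rs = length gs" and "gs \<noteq> []"
  shows "Poly (horner_step (last rs) a rs gs) = pCons a (Poly rs) - smult (last rs) (monic_poly gs)"
proof (rule poly_eqI)
  fix n
  have "rs \<noteq> []" using assms by auto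
  then have last: "last rs = rs ! (length gs - 1)" using assms(1) by (simp add: last_conv_nth)
  consider "n < length gs" | "n = length gs" | "n > length gs" by linarith
  then show "coeff (Poly (horner_step (last rs) a rs gs)) n
      = coeff (pCons a (Poly rs) - smult (last rs) (monic_poly gs)) n"
  proof cases
    case 1
    then show ?thesis using assms by (cases n) (auto simp: nth_default_def nth_horner_step coeff_monic_poly)
  next
    case 2
    obtain m where "length gs = Suc m" using assms(2) by (cases "length gs") auto
    then show ?thesis using assms(1) last 2 by (simp add: nth_default_def coeff_monic_poly)
  next
    case 3
    then show ?thesis using assms by (cases n) (auto simp: nth_default_def coeff_monic_poly)
  qed
qed

lemma horner_step_remainder:
  assumes "length rs = length gs" and "gs \<noteq> []"
    and "monic_poly gs dvd f - Poly rs"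
  shows "monic_poly gs dvd pCons a f - Poly (horner_step (last rs) a rs gs)"
proof -
  have eq: "pCons a f - Poly (horner_step (last rs) a rs gs)
      = [:0, 1:] * (f - Poly rs) + smult (last rs) (monic_poly gs)"
    unfolding Poly_horner_step[OF assms(1,2)]
    by (simp add: pCons_0_as_mult[symmetric] algebra_simps)
  have "monic_poly gs dvd [:0, 1:] * (f - Poly rs) + smult (last rs) (monic_poly gs)"
    using assms(3) by (intro dvd_add dvd_mult dvd_smult) simp_all
  then show ?thesis by (simp only: eq)
qed

lemma monic_poly_dvd_iff_remainder_zero:
  fixes rs :: "'a::idom list"
  assumes "length rs = length gs" and "monic_poly gs dvd f - Poly rs"
  shows "monic_poly gs dvd f \<longleftrightarrow> (\<forall>r\<in>set rs. r = 0)"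
proof
  assume "monic_poly gs dvd f"
  then have "monic_poly gs dvd f - (f - Poly rs)" using assms(2) by (rule dvd_diff)
  then have dvd: "monic_poly gs dvd Poly rs" by simp
  have "Poly rs = 0"
  proof (rule ccontr)
    assume "Poly rs \<noteq> 0"
    then have "rs \<noteq> []" by auto
    have "degree (Poly rs) \<le> length rs - 1" by (rule degree_le) (auto simp: nth_default_def)
    moreover have "length gs \<le> degree (Poly rs)"
      using dvd_imp_degree_le[OF dvd \<open>Poly rs \<noteq> 0\<close>] by simp
    moreover have "length gs > 0" using assms(1) \<open>rs \<noteq> []\<close> by (metis length_greater_0_conv)
    ultimately show False using assms(1) by linarith
  qed
  then show "\<forall>r\<in>set rs. r = 0" by (auto simp: Poly_eq_0)
next
  assume "\<forall>r\<in>set rs. r = 0"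
  then have "rs = replicate (length rs) 0" by (intro replicate_eqI) auto
  then have "Poly rs = 0" by (metis Poly_replicate_0)
  then show "monic_poly gs dvd f" using assms(2) by simp
qed

definition padded_one :: "nat \<Rightarrow> 'a::zero_neq_one list" where
  "padded_one d = 1 # replicate (d - 1) 0"

lemma Poly_padded_one [simp]: "Poly (padded_one d) = 1"
  by (simp add: padded_one_def)

lemma length_padded_one [simp]: "d \<ge> 1 \<Longrightarrow> length (padded_one d) = d"
  unfolding padded_one_def by simp

section \<open>Enumerating coefficient lists\<close>

text \<open>Coefficient lists are enumerated in the order of their bijective base-\<open>p\<close> value
  (\<open>list_rank\<close>): by length, and within one length as little-endian numerals.
  \<open>list_succ\<close> is the successor in this order.\<close>

fun list_succ :: "'a::ring_1 list \<Rightarrow> 'a list" where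
  "list_succ [] = [0]"
| "list_succ (a # as) = (if a + 1 = 0 then 0 # list_succ as else (a + 1) # as)"

lemma list_succ_carry:
  "c + 1 \<noteq> 0 \<Longrightarrow> list_succ (replicate k (-1) @ c # cs) = replicate k 0 @ (c + 1) # cs"
  by (induction k) auto

lemma list_succ_overflow: "list_succ (replicate k (-1 :: 'a::ring_1)) = replicate (Suc k) 0"
  by (induction k) auto

lemma list_succ_nonempty: "list_succ cs \<noteq> []"
  by (cases cs) auto

lemma list_carry_split:
  obtains k where "cs = replicate k (-1 :: 'a::ring_1)"
  | k c cs' where "cs = replicate k (-1) @ c # cs'" "c + 1 \<noteq> 0"
proof -
  define k where "k = length (takeWhile (\<lambda>a. a = -1) cs)"
  have "takeWhile (\<lambda>a. a = -1) cs = replicate k (-1)"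
    unfolding k_def by (intro replicate_eqI) (auto dest: set_takeWhileD)
  then have cs: "cs = replicate k (-1) @ dropWhile (\<lambda>a. a = -1) cs"
    by (metis takeWhile_dropWhile_id)
  show ?thesis
  proof (cases "dropWhile (\<lambda>a. a = -1) cs")
    case Nil
    then show ?thesis using cs that(1) by (metis append_Nil2)
  next
    case (Cons c cs')
    then have "c + 1 \<noteq> 0" by (simp add: dropWhile_eq_Cons_conv add_eq_0_iff2)
    then show ?thesis using cs Cons that(2) by simp
  qed
qed

definition nat_of_mod_ring :: "'p::prime_card mod_ring \<Rightarrow> nat" where
  "nat_of_mod_ring a = nat (to_int_mod_ring a)"

lemma to_int_mod_ring_bounds:
  "0 \<le> to_int_mod_ring (a::'p::prime_card mod_ring) \<and> to_int_mod_ring a < CARD('p)"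
proof -
  have "to_int_mod_ring a \<in> range (to_int_mod_ring :: 'p mod_ring \<Rightarrow> int)" by (rule rangeI)
  then show ?thesis unfolding range_to_int_mod_ring by simp
qed

lemma nat_of_mod_ring_less: "nat_of_mod_ring (a::'p::prime_card mod_ring) < CARD('p)"
  unfolding nat_of_mod_ring_def using to_int_mod_ring_bounds[of a] by linarith

lemma of_nat_nat_of_mod_ring [simp]: "of_nat (nat_of_mod_ring a) = (a::'p::prime_card mod_ring)"
  unfolding nat_of_mod_ring_def using to_int_mod_ring_bounds[of a]
  by (simp add: of_nat_nat of_int_of_int_mod_ring)

lemma nat_of_mod_ring_inj: "nat_of_mod_ring a = nat_of_mod_ring b \<Longrightarrow> a = b"
  by (metis of_nat_nat_of_mod_ring)

lemma nat_of_mod_ring_0 [simp]: "nat_of_mod_ring (0::'p::prime_card mod_ring) = 0"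
  unfolding nat_of_mod_ring_def by simp

lemma nat_of_mod_ring_add_1:
  "nat_of_mod_ring (a + 1 :: 'p::prime_card mod_ring) = Suc (nat_of_mod_ring a) mod CARD('p)"
proof -
  have "to_int_mod_ring (1::'p mod_ring) = 1" by transfer simp
  then have "nat_of_mod_ring (a + 1) = nat ((to_int_mod_ring a + 1) mod int CARD('p))"
    unfolding nat_of_mod_ring_def to_int_mod_ring_add by simp
  also have "\<dots> = nat (to_int_mod_ring a + 1) mod CARD('p)"
    using to_int_mod_ring_bounds[of a] by (simp add: nat_mod_distrib)
  finally show ?thesis
    unfolding nat_of_mod_ring_def using to_int_mod_ring_bounds[of a] by (simp add: nat_add_distrib)
qed

lemma Suc_nat_of_mod_ring_eq_card:
  assumes "a + 1 = (0::'p::prime_card mod_ring)"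
  shows "Suc (nat_of_mod_ring a) = CARD('p)"
proof -
  have "Suc (nat_of_mod_ring a) mod CARD('p) = 0" using nat_of_mod_ring_add_1[of a] assms by simp
  moreover have "Suc (nat_of_mod_ring a) \<le> CARD('p)" using nat_of_mod_ring_less[of a] by simp
  ultimately show ?thesis by (metis le_neq_implies_less mod_less nat.distinct(1))
qed

lemma nat_of_mod_ring_add_1_no_wrap:
  assumes "a + 1 \<noteq> (0::'p::prime_card mod_ring)"
  shows "nat_of_mod_ring (a + 1) = Suc (nat_of_mod_ring a)"
proof -
  have "Suc (nat_of_mod_ring a) \<noteq> CARD('p)"
  proof
    assume "Suc (nat_of_mod_ring a) = CARD('p)"
    then have "nat_of_mod_ring (a + 1) = nat_of_mod_ring 0" using nat_of_mod_ring_add_1[of a] by simp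
    then show False using assms nat_of_mod_ring_inj by blast
  qed
  then have "Suc (nat_of_mod_ring a) < CARD('p)" using nat_of_mod_ring_less[of a] by simp
  then show ?thesis using nat_of_mod_ring_add_1[of a] by simp
qed

fun list_rank :: "'p::prime_card mod_ring list \<Rightarrow> nat" where
  "list_rank [] = 0"
| "list_rank (a # as) = Suc (nat_of_mod_ring a) + CARD('p) * list_rank as"

lemma list_rank_list_succ: "list_rank (list_succ cs) = Suc (list_rank cs)"
  by (induction cs) (auto simp: Suc_nat_of_mod_ring_eq_card nat_of_mod_ring_add_1_no_wrap)

lemma list_rank_inj: "list_rank cs = list_rank ds \<Longrightarrow> cs = (ds :: 'p::prime_card mod_ring list)"
proof (induction cs arbitrary: ds)
  case Nil
  then show ?case by (cases ds) auto
next
  case (Cons a as)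
  then obtain b bs where ds: "ds = b # bs" by (cases ds) auto
  have "nat_of_mod_ring a + CARD('p) * list_rank as = nat_of_mod_ring b + CARD('p) * list_rank bs"
    using Cons.prems ds by simp
  note digits = arg_cong[OF this, of "\<lambda>n. n mod CARD('p)"] arg_cong[OF this, of "\<lambda>n. n div CARD('p)"]
  have "nat_of_mod_ring a = nat_of_mod_ring b"
    using digits(1) nat_of_mod_ring_less[of a] nat_of_mod_ring_less[of b] by simp
  moreover have "list_rank as = list_rank bs"
    using digits(2) nat_of_mod_ring_less[of a] nat_of_mod_ring_less[of b] by simp
  ultimately show ?case using Cons.IH ds nat_of_mod_ring_inj by blast
qed

fun repunit :: "nat \<Rightarrow> nat \<Rightarrow> nat" where
  "repunit b 0 = 0"
| "repunit b (Suc n) = Suc (b * repunit b n)"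

lemma repunit_mono:
  assumes "b > 0" and "m \<le> n"
  shows "repunit b m \<le> repunit b n"
  using assms(2)
proof (induction n rule: dec_induct)
  case (step n)
  have "repunit b n \<le> b * repunit b n" using assms(1) by (simp add: Suc_le_eq)
  then show ?case using step.IH by (simp only: repunit.simps)
qed simp

lemma list_rank_bounds:
  fixes cs :: "'p::prime_card mod_ring list"
  shows "repunit CARD('p) (length cs) \<le> list_rank cs \<and> list_rank cs < repunit CARD('p) (Suc (length cs))"
proof (induction cs)
  case (Cons a as)
  have "CARD('p) * repunit CARD('p) (length as) \<le> CARD('p) * list_rank as"
    using Cons.IH by simp
  then have lower: "repunit CARD('p) (length (a # as)) \<le> list_rank (a # as)"
    by (simp add: trans_le_add2)
  have "list_rank (a # as) \<le> CARD('p) + CARD('p) * list_rank as"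
    using nat_of_mod_ring_less[of a] by simp
  also have "\<dots> \<le> CARD('p) * repunit CARD('p) (Suc (length as))"
    using Cons.IH mult_le_mono2[of "Suc (list_rank as)"] by simp
  finally have "list_rank (a # as) < repunit CARD('p) (Suc (length (a # as)))"
    by (simp only: length_Cons repunit.simps(2) le_imp_less_Suc)
  with lower show ?case by simp
qed simp

lemma length_le_if_list_rank_le:
  fixes cs ds :: "'p::prime_card mod_ring list"
  assumes "list_rank cs \<le> list_rank ds"
  shows "length cs \<le> length ds"
proof (rule ccontr)
  assume "\<not> ?thesis"
  then have "repunit CARD('p) (Suc (length ds)) \<le> repunit CARD('p) (length cs)"
    by (intro repunit_mono) simp_all
  then show False using conjunct1[OF list_rank_bounds[of cs]] conjunct2[OF list_rank_bounds[of ds]] assms by linarith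
qed

lemma list_rank_less_repunit:
  "length (cs :: 'p::prime_card mod_ring list) < n \<Longrightarrow> list_rank cs < repunit CARD('p) n"
  using conjunct2[OF list_rank_bounds[of cs]] repunit_mono[of "CARD('p)" "Suc (length cs)" n] by simp

lemma length_le_if_list_rank_le_repunit:
  assumes "list_rank (cs :: 'p::prime_card mod_ring list) \<le> repunit CARD('p) n"
  shows "length cs \<le> n"
proof (rule ccontr)
  assume "\<not> ?thesis"
  then have "repunit CARD('p) (Suc n) \<le> repunit CARD('p) (length cs)"
    by (intro repunit_mono) simp_all
  moreover have "repunit CARD('p) n \<le> CARD('p) * repunit CARD('p) n" by simp
  ultimately show False using conjunct1[OF list_rank_bounds[of cs]] assms by simp
qed

lemma list_rank_replicate_0: "list_rank (replicate n (0::'p::prime_card mod_ring)) = repunit CARD('p) n"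
  by (induction n) auto

section \<open>Runs of a transition function under an invariant\<close>

definition reaches_within :: "('c \<Rightarrow> 'c) \<Rightarrow> ('c \<Rightarrow> bool) \<Rightarrow> 'c \<Rightarrow> 'c \<Rightarrow> bool" where
  "reaches_within f P c c' \<longleftrightarrow> (\<exists>t. (f ^^ t) c = c' \<and> (\<forall>s\<le>t. P ((f ^^ s) c)))"

lemma reaches_within_refl: "P c \<Longrightarrow> reaches_within f P c c"
  unfolding reaches_within_def by (intro exI[of _ 0]) auto

lemma reaches_within_step:
  assumes "P c" and "reaches_within f P (f c) c'"
  shows "reaches_within f P c c'"
proof -
  obtain t where t: "(f ^^ t) (f c) = c'" "\<forall>s\<le>t. P ((f ^^ s) (f c))"
    using assms(2) unfolding reaches_within_def by blast
  have "P ((f ^^ s) c)" if "s \<le> Suc t" for s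
    using that t(2) assms(1) by (cases s) (simp_all add: funpow_Suc_right del: funpow.simps)
  then show ?thesis
    unfolding reaches_within_def using t(1)
    by (intro exI[of _ "Suc t"]) (simp add: funpow_Suc_right del: funpow.simps)
qed

lemma reaches_within_trans [trans]:
  assumes "reaches_within f P a b" and "reaches_within f P b c"
  shows "reaches_within f P a c"
proof -
  obtain t where t: "(f ^^ t) a = b" "\<forall>s\<le>t. P ((f ^^ s) a)"
    using assms(1) unfolding reaches_within_def by blast
  then show ?thesis
  proof (induction t arbitrary: a)
    case 0
    then show ?case using assms(2) by simp
  next
    case (Suc t)
    have "(f ^^ t) (f a) = b" using Suc.prems(1) by (simp add: funpow_Suc_right del: funpow.simps)
    moreover have "\<forall>s\<le>t. P ((f ^^ s) (f a))"
    proof (intro allI impI)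
      fix s assume "s \<le> t"
      then have "P ((f ^^ Suc s) a)" using Suc.prems(2) by blast
      then show "P ((f ^^ s) (f a))" by (simp add: funpow_Suc_right del: funpow.simps)
    qed
    ultimately have "reaches_within f P (f a) c" by (rule Suc.IH)
    moreover have "P a" using Suc.prems(2) by (metis funpow_0 le0)
    ultimately show ?case by (rule reaches_within_step[rotated])
  qed
qed

lemma reaches_within_one: "P c \<Longrightarrow> P c' \<Longrightarrow> f c = c' \<Longrightarrow> reaches_within f P c c'"
  by (rule reaches_within_step) (auto intro: reaches_within_refl)

lemma reaches_within_iterate_up:
  assumes "a \<le> b"
    and "\<And>j. a \<le> j \<Longrightarrow> j < b \<Longrightarrow> f (C j) = C (Suc j)"
    and "\<And>j. a \<le> j \<Longrightarrow> j \<le> b \<Longrightarrow> P (C j)"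
  shows "reaches_within f P (C a) (C b)"
  using assms
proof (induction b rule: dec_induct)
  case base
  then show ?case by (simp add: reaches_within_refl)
next
  case (step b)
  then have "reaches_within f P (C a) (C b)" by simp
  also have "reaches_within f P (C b) (C (Suc b))"
    using step by (intro reaches_within_one) simp_all
  finally show ?case .
qed

lemma reaches_within_iterate_down:
  assumes "a \<le> b"
    and "\<And>j. a \<le> j \<Longrightarrow> j < b \<Longrightarrow> f (C (Suc j)) = C j"
    and "\<And>j. a \<le> j \<Longrightarrow> j \<le> b \<Longrightarrow> P (C j)"
  shows "reaches_within f P (C b) (C a)"
  using assms
proof (induction a rule: inc_induct)
  case base
  then show ?case by (simp add: reaches_within_refl)
next
  case (step a)
  then have "reaches_within f P (C b) (C (Suc a))" by simp
  also have "reaches_within f P (C (Suc a)) (C a)"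
    using step by (intro reaches_within_one) simp_all
  finally show ?case .
qed

lemma run_if_reaches_within:
  assumes "reaches_within (step M x) P (init_config M) c"
  obtains t where "run M x t = c" "\<forall>s\<le>t. P (run M x s)"
  using assms unfolding reaches_within_def run_def by blast

section \<open>Tapes holding a list\<close>

text \<open>A work tape holding the list \<open>xs\<close> in cells \<open>1, \<dots>, length xs\<close>; cell 0 stays blank and
  marks the left end.\<close>

definition tape_of :: "'a list \<Rightarrow> nat \<Rightarrow> 'a option" where
  "tape_of xs i = (if 0 < i \<and> i \<le> length xs then Some (xs ! (i - 1)) else None)"

lemma tape_of_0 [simp]: "tape_of xs 0 = None"
  unfolding tape_of_def by simp

lemma tape_of_update_0 [simp]: "(tape_of xs)(0 := None) = tape_of xs"
  unfolding tape_of_def by (auto simp: fun_eq_iff)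

lemma tape_of_Nil: "(\<lambda>_. None) = tape_of []"
  unfolding tape_of_def by (auto simp: fun_eq_iff)

lemma tape_of_Suc: "j < length xs \<Longrightarrow> tape_of xs (Suc j) = Some (xs ! j)"
  unfolding tape_of_def by simp

lemma tape_of_inside: "0 < i \<Longrightarrow> i \<le> length xs \<Longrightarrow> tape_of xs i = Some (xs ! (i - 1))"
  unfolding tape_of_def by simp

lemma tape_of_beyond: "length xs < i \<Longrightarrow> tape_of xs i = None"
  unfolding tape_of_def by simp

lemma tape_of_update: "j < length xs \<Longrightarrow> (tape_of xs)(Suc j := Some a) = tape_of (xs[j := a])"
  unfolding tape_of_def by (auto simp: fun_eq_iff)

lemma tape_of_snoc: "(tape_of xs)(Suc (length xs) := Some a) = tape_of (xs @ [a])"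
  unfolding tape_of_def by (auto simp: fun_eq_iff nth_append)

lemma tape_of_butlast: "xs \<noteq> [] \<Longrightarrow> (tape_of xs)(length xs := None) = tape_of (butlast xs)"
  by (induction xs rule: rev_induct) (auto simp: tape_of_def fun_eq_iff nth_append)

lemma tape_of_update_blank_beyond: "length xs < i \<Longrightarrow> (tape_of xs)(i := None) = tape_of xs"
  unfolding tape_of_def by (auto simp: fun_eq_iff)

lemma tape_of_update_same: "j < length xs \<Longrightarrow> xs ! j = a \<Longrightarrow> (tape_of xs)(Suc j := Some a) = tape_of xs"
  unfolding tape_of_def by (auto simp: fun_eq_iff)

lemma tape_of_update_same':
  "0 < i \<Longrightarrow> i \<le> length xs \<Longrightarrow> xs ! (i - 1) = a \<Longrightarrow> (tape_of xs)(i := Some a) = tape_of xs"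
  unfolding tape_of_def by (auto simp: fun_eq_iff)

lemma list_update_replicate_prefix:
  "j < k \<Longrightarrow> (replicate j a @ replicate (k - j) b @ ys)[j := a] = replicate (Suc j) a @ replicate (k - Suc j) b @ ys"
proof -
  assume "j < k"
  then have "k - j = Suc (k - Suc j)" by simp
  then have "replicate (k - j) b = b # replicate (k - Suc j) b" by simp
  then show ?thesis by (simp add: list_update_append replicate_app_Cons_same)
qed

lemma nth_replicate_prefix: "j < k \<Longrightarrow> (replicate j a @ replicate (k - j) b @ ys) ! j = b"
proof -
  assume "j < k"
  then have "k - j = Suc (k - Suc j)" by simp
  then show ?thesis by (simp add: nth_append)
qed

lemma take_drop_update:
  "j < length xs \<Longrightarrow> length xs = length ys \<Longrightarrow>
     (take j xs @ drop j ys)[j := xs ! j] = take (Suc j) xs @ drop (Suc j) ys"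
  by (simp add: list_update_append take_Suc_conv_app_nth upd_conv_take_nth_drop)

section \<open>A Turing machine searching for an irreducible polynomial\<close>

text \<open>\<open>Act l u v mi w0 w1 w2 w3 m0 m1 m2 m3 ot\<close>: go to label \<open>l\<close> with registers \<open>u, v\<close>, move
  the input head by \<open>mi\<close>, write \<open>w0, \<dots>, w3\<close> on the work tapes and move their heads by
  \<open>m0, \<dots>, m3\<close>, and output \<open>ot\<close>.\<close>

datatype 'p action = Act nat "'p mod_ring" "'p mod_ring" move "'p wsym" "'p wsym" "'p wsym" "'p wsym"
  move move move move "'p mod_ring option"

text \<open>A control state is a label \<open>l < 34\<close> together with two registers \<open>u, v \<in> GF(p)\<close>.\<close>

definition state_code :: "nat \<Rightarrow> 'p::prime_card mod_ring \<Rightarrow> 'p mod_ring \<Rightarrow> nat" where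
  "state_code l u v = l + 34 * (nat_of_mod_ring u + CARD('p) * nat_of_mod_ring v)"

lemma state_code_less: "l < 34 \<Longrightarrow> state_code l (u::'p::prime_card mod_ring) v < 34 * CARD('p) * CARD('p)"
proof -
  assume "l < 34"
  have "nat_of_mod_ring u + CARD('p) * nat_of_mod_ring v < CARD('p) + CARD('p) * nat_of_mod_ring v"
    using nat_of_mod_ring_less[of u] by simp
  also have "\<dots> \<le> CARD('p) * CARD('p)"
    using nat_of_mod_ring_less[of v] mult_le_mono2[of "Suc (nat_of_mod_ring v)" "CARD('p)" "CARD('p)"]
    by simp
  finally show ?thesis unfolding state_code_def using \<open>l < 34\<close> by simp
qed

lemma state_code_decode:
  assumes "l < 34"
  shows "state_code l u v mod 34 = l"
    and "of_nat (state_code l u v div 34) = u"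
    and "of_nat (state_code l u v div 34 div CARD('p)) = (v::'p::prime_card mod_ring)"
proof -
  have code: "state_code l u v div 34 = nat_of_mod_ring u + CARD('p) * nat_of_mod_ring v"
    using assms unfolding state_code_def by simp
  show "state_code l u v mod 34 = l" using assms unfolding state_code_def by (simp only: mod_mult_self2 mod_less)
  show "of_nat (state_code l u v div 34) = u" unfolding code by simp
  show "of_nat (state_code l u v div 34 div CARD('p)) = v"
    unfolding code using nat_of_mod_ring_less[of u] by simp
qed

abbreviation "Lm \<equiv> MLeft"
abbreviation "Sm \<equiv> MStay"
abbreviation "Rm \<equiv> MRight"

text \<open>Monic polynomials are kept on the tapes as their coefficients below the leading 1
  (\<open>monic_poly\<close>). Work tape 0 holds the candidate \<open>f\<close> of degree \<open>R\<close>, tape 1 the trial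
  divisor \<open>g\<close>, tape 2 the remainder of \<open>f\<close> modulo \<open>g\<close>, and tape 3 the input, which is then
  used as a binary counter. Labels 0, 2, 3 copy the input to tape 3; 4, 5 count it down,
  writing \<open>f = X\<^sup>R\<close>; 6--8 start with \<open>g = X\<close>; 10--13 reset the remainder to 1, and accept \<open>f\<close>
  once \<open>deg g = R\<close>; 14--17 perform one Horner step per coefficient of \<open>f\<close>; 20--24 test the
  remainder and advance \<open>g\<close>; 25--29 and 31 advance \<open>f\<close> and restart with \<open>g = X\<close>; 30, 32, 33
  print \<open>f\<close> and halt. During a Horner step the registers hold the top coefficient of the
  remainder and the cell value being shifted.\<close>

definition search_action :: "nat \<Rightarrow> 'p::prime_card mod_ring \<Rightarrow> 'p mod_ring \<Rightarrow> bool option \<Rightarrow>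
   'p wsym \<Rightarrow> 'p wsym \<Rightarrow> 'p wsym \<Rightarrow> 'p wsym \<Rightarrow> 'p action" where
"search_action l u v a s0 s1 s2 s3 = (
 if l = 0 then Act 2 u v Sm s0 s1 s2 s3 Rm Sm Sm Rm None
 else if l = 2 then (case a of Some b \<Rightarrow> Act 2 u v Rm s0 s1 s2 (Some (of_bool b)) Sm Sm Sm Rm None
                           | None \<Rightarrow> Act 3 u v Sm s0 s1 s2 s3 Sm Sm Sm Lm None)
 else if l = 3 then (case s3 of Some _ \<Rightarrow> Act 3 u v Sm s0 s1 s2 s3 Sm Sm Sm Lm None
                           | None \<Rightarrow> Act 4 u v Sm s0 s1 s2 s3 Sm Sm Sm Rm None)
 else if l = 4 then (case s3 of None \<Rightarrow> Act 6 u v Sm s0 s1 s2 s3 Sm Sm Sm Sm None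
                           | Some b \<Rightarrow> if b = 0 then Act 4 u v Sm s0 s1 s2 (Some 1) Sm Sm Sm Rm None
                                       else Act 5 u v Sm s0 s1 s2 (Some 0) Sm Sm Sm Lm None)
 else if l = 5 then (case s3 of Some _ \<Rightarrow> Act 5 u v Sm s0 s1 s2 s3 Sm Sm Sm Lm None
                           | None \<Rightarrow> Act 4 u v Sm (Some 0) s1 s2 s3 Rm Sm Sm Rm None)
 else if l = 6 then Act 7 u v Sm s0 s1 s2 s3 Lm Sm Sm Sm None
 else if l = 7 then (case s0 of Some _ \<Rightarrow> Act 7 u v Sm s0 s1 s2 s3 Lm Sm Sm Sm None
                           | None \<Rightarrow> Act 8 u v Sm s0 s1 s2 s3 Sm Rm Rm Sm None)
 else if l = 8 then Act 10 u v Sm s0 (Some 0) (Some 0) s3 Sm Lm Lm Sm None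
 else if l = 10 then Act 11 u v Sm s0 s1 s2 s3 Rm Rm Rm Sm None
 else if l = 11 then Act 12 u v Sm s0 s1 (Some 1) s3 Rm Rm Rm Sm None
 else if l = 12 then (case s1 of Some _ \<Rightarrow> Act 12 u v Sm s0 s1 (Some 0) s3 Rm Rm Rm Sm None
                           | None \<Rightarrow> (case s0 of None \<Rightarrow> Act 30 u v Sm s0 s1 s2 s3 Sm Sm Sm Sm None
                                                | Some _ \<Rightarrow> Act 13 u v Sm s0 s1 s2 s3 Rm Sm Sm Sm None))
 else if l = 13 then (case s0 of Some _ \<Rightarrow> Act 13 u v Sm s0 s1 s2 s3 Rm Sm Sm Sm None
                           | None \<Rightarrow> Act 14 u v Sm s0 s1 s2 s3 Lm Sm Sm Sm None)
 else if l = 14 then (case s0 of None \<Rightarrow> Act 20 u v Sm s0 s1 s2 s3 Sm Sm Sm Sm None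
                           | Some c \<Rightarrow> Act 15 u c Sm s0 s1 s2 s3 Sm Lm Lm Sm None)
 else if l = 15 then Act 16 (case s2 of Some c \<Rightarrow> c | None \<Rightarrow> 0) v Sm s0 s1 s2 s3 Sm Lm Lm Sm None
 else if l = 16 then (case s1 of Some _ \<Rightarrow> Act 16 u v Sm s0 s1 s2 s3 Sm Lm Lm Sm None
                           | None \<Rightarrow> Act 17 u v Sm s0 s1 s2 s3 Sm Rm Rm Sm None)
 else if l = 17 then (case s1 of None \<Rightarrow> Act 14 u v Sm s0 s1 s2 s3 Lm Sm Sm Sm None
                           | Some g \<Rightarrow> Act 17 u (case s2 of Some c \<Rightarrow> c | None \<Rightarrow> 0) Sm s0 s1
                                         (Some (v - u * g)) s3 Sm Rm Rm Sm None)
 else if l = 20 then Act 21 u v Sm s0 s1 s2 s3 Sm Lm Lm Sm None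
 else if l = 21 then (case s1 of None \<Rightarrow> Act 25 u v Sm s0 s1 s2 s3 Sm Sm Sm Sm None
                           | Some _ \<Rightarrow> if s2 = Some 0 then Act 21 u v Sm s0 s1 s2 s3 Sm Lm Lm Sm None
                                      else Act 22 u v Sm s0 s1 s2 s3 Sm Sm Sm Sm None)
 else if l = 22 then (case s1 of Some _ \<Rightarrow> Act 22 u v Sm s0 s1 s2 s3 Sm Lm Lm Sm None
                           | None \<Rightarrow> Act 23 u v Sm s0 s1 s2 s3 Sm Rm Rm Sm None)
 else if l = 23 then (case s1 of None \<Rightarrow> Act 24 u v Sm s0 (Some 0) (Some 0) s3 Sm Lm Lm Sm None
                           | Some g \<Rightarrow> if g + 1 = 0 then Act 23 u v Sm s0 (Some 0) s2 s3 Sm Rm Rm Sm None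
                                      else Act 24 u v Sm s0 (Some (g + 1)) s2 s3 Sm Lm Lm Sm None)
 else if l = 24 then (case s1 of Some _ \<Rightarrow> Act 24 u v Sm s0 s1 s2 s3 Sm Lm Lm Sm None
                           | None \<Rightarrow> Act 10 u v Sm s0 s1 s2 s3 Sm Sm Sm Sm None)
 else if l = 25 then Act 26 u v Sm s0 s1 s2 s3 Rm Sm Sm Sm None
 else if l = 26 then (case s0 of None \<Rightarrow> Act 26 u v Sm s0 s1 s2 s3 Sm Sm Sm Sm None
                           | Some c \<Rightarrow> if c + 1 = 0 then Act 26 u v Sm (Some 0) s1 s2 s3 Rm Sm Sm Sm None
                                      else Act 27 u v Sm (Some (c + 1)) s1 s2 s3 Lm Sm Sm Sm None)
 else if l = 27 then (case s0 of Some _ \<Rightarrow> Act 27 u v Sm s0 s1 s2 s3 Lm Sm Sm Sm None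
                           | None \<Rightarrow> Act 28 u v Sm s0 s1 s2 s3 Sm Sm Sm Sm None)
 else if l = 28 then Act 29 u v Sm s0 s1 s2 s3 Sm Rm Rm Sm None
 else if l = 29 then (case s1 of Some _ \<Rightarrow> Act 29 u v Sm s0 s1 s2 s3 Sm Rm Rm Sm None
                           | None \<Rightarrow> Act 31 u v Sm s0 s1 s2 s3 Sm Lm Lm Sm None)
 else if l = 31 then (case s1 of Some _ \<Rightarrow> Act 31 u v Sm s0 None None s3 Sm Lm Lm Sm None
                           | None \<Rightarrow> Act 8 u v Sm s0 s1 s2 s3 Sm Rm Rm Sm None)
 else if l = 30 then Act 32 u v Sm s0 s1 s2 s3 Lm Sm Sm Sm None
 else if l = 32 then (case s0 of Some _ \<Rightarrow> Act 32 u v Sm s0 s1 s2 s3 Lm Sm Sm Sm None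
                           | None \<Rightarrow> Act 33 u v Sm s0 s1 s2 s3 Rm Sm Sm Sm None)
 else if l = 33 then (case s0 of Some c \<Rightarrow> Act 33 u v Sm s0 s1 s2 s3 Rm Sm Sm Sm (Some c)
                           | None \<Rightarrow> Act 1 0 0 Sm s0 s1 s2 s3 Sm Sm Sm Sm (Some 1))
 else Act l u v Sm s0 s1 s2 s3 Sm Sm Sm Sm None)"

lemma search_action_label_less:
  "l < 34 \<Longrightarrow> search_action l u v a s0 s1 s2 s3 = Act l' u' v' mi w0 w1 w2 w3 m0 m1 m2 m3 ot \<Longrightarrow> l' < 34"
  unfolding search_action_def by (auto split: if_splits option.splits)

definition search_delta :: "nat \<Rightarrow> bool option \<Rightarrow> 'p::prime_card wsym list
   \<Rightarrow> nat \<times> move \<times> 'p wsym list \<times> move list \<times> 'p mod_ring option" where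
  "search_delta q a rs =
    (case search_action (q mod 34) (of_nat (q div 34)) (of_nat (q div 34 div CARD('p)))
            a (rs ! 0) (rs ! 1) (rs ! 2) (rs ! 3) of
      Act l' u' v' mi w0 w1 w2 w3 m0 m1 m2 m3 ot \<Rightarrow>
        (state_code l' u' v', mi, [w0, w1, w2, w3], [m0, m1, m2, m3], ot))"

definition search_tm :: "'p::prime_card tm" where
  "search_tm = \<lparr>ntapes = 4, nstates = 34 * CARD('p) * CARD('p), delta = search_delta\<rparr>"

lemma wf_search_tm: "wf_tm (search_tm :: 'p::prime_card tm)"
  unfolding wf_tm_def
proof (intro conjI allI impI)
  show "2 \<le> nstates (search_tm :: 'p tm)"
    using nontriv[where 'a='p] by (simp add: search_tm_def)
next
  fix q a and rs :: "'p wsym list"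
  obtain l' u' v' mi w0 w1 w2 w3 m0 m1 m2 m3 ot where
    act: "search_action (q mod 34) (of_nat (q div 34)) (of_nat (q div 34 div CARD('p)) :: 'p mod_ring)
       a (rs ! 0) (rs ! 1) (rs ! 2) (rs ! 3) = Act l' u' v' mi w0 w1 w2 w3 m0 m1 m2 m3 ot"
    by (cases "search_action (q mod 34) (of_nat (q div 34))
      (of_nat (q div 34 div CARD('p)) :: 'p mod_ring) a (rs ! 0) (rs ! 1) (rs ! 2) (rs ! 3)") auto
  have "l' < 34" using search_action_label_less[OF _ act] by simp
  then have "state_code l' u' v' < nstates (search_tm :: 'p tm)"
    unfolding search_tm_def using state_code_less by simp
  then show "case delta (search_tm :: 'p tm) q a rs of (q', mi, ws, ms, ot) \<Rightarrow>
      q' < nstates (search_tm :: 'p tm) \<and> length ws = ntapes (search_tm :: 'p tm)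
      \<and> length ms = ntapes (search_tm :: 'p tm)"
    unfolding search_tm_def using act by (simp add: search_delta_def)
qed

abbreviation conf :: "nat \<Rightarrow> 'p::prime_card mod_ring \<Rightarrow> 'p mod_ring \<Rightarrow> nat \<Rightarrow> nat \<Rightarrow> nat \<Rightarrow> nat \<Rightarrow> nat
   \<Rightarrow> (nat \<Rightarrow> 'p wsym) \<Rightarrow> (nat \<Rightarrow> 'p wsym) \<Rightarrow> (nat \<Rightarrow> 'p wsym) \<Rightarrow> (nat \<Rightarrow> 'p wsym)
   \<Rightarrow> 'p mod_ring list \<Rightarrow> 'p config" where
  "conf l u v i h0 h1 h2 h3 t0 t1 t2 t3 os \<equiv> \<lparr>cstate = state_code l u v, ipos = i,
     heads = [h0, h1, h2, h3], tapes = [t0, t1, t2, t3], outp = os\<rparr>"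

lemma step_search_tm:
  assumes "l < 34" "l \<noteq> 1"
  shows "step search_tm x (conf l u v i h0 h1 h2 h3 t0 t1 t2 t3 os) =
    (case search_action l u v (input_sym x i) (t0 h0) (t1 h1) (t2 h2) (t3 h3) of
       Act l' u' v' mi w0 w1 w2 w3 m0 m1 m2 m3 ot \<Rightarrow>
         conf l' u' v' (move_head mi i) (move_head m0 h0) (move_head m1 h1) (move_head m2 h2)
           (move_head m3 h3) (t0(h0 := w0)) (t1(h1 := w1)) (t2(h2 := w2)) (t3(h3 := w3))
           (os @ (case ot of None \<Rightarrow> [] | Some a \<Rightarrow> [a])))"
proof -
  have "state_code l u v \<noteq> 1" using state_code_decode(1)[OF assms(1), of u v] assms(2) by auto
  then show ?thesis
    using assms by (simp add: step_def search_tm_def search_delta_def state_code_decode split: action.split)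
qed

definition heads_within :: "nat \<Rightarrow> nat \<Rightarrow> 'p::prime_card config \<Rightarrow> bool" where
  "heads_within R L c \<longleftrightarrow>
     heads c ! 0 \<le> Suc R \<and> heads c ! 1 \<le> Suc R \<and> heads c ! 2 \<le> Suc R \<and> heads c ! 3 \<le> Suc L"

lemma heads_within_conf [simp]:
  "heads_within R L (conf l u v i h0 h1 h2 h3 t0 t1 t2 t3 os) \<longleftrightarrow>
     h0 \<le> Suc R \<and> h1 \<le> Suc R \<and> h2 \<le> Suc R \<and> h3 \<le> Suc L"
  unfolding heads_within_def by simp

abbreviation search_reaches :: "nat \<Rightarrow> nat \<Rightarrow> bool list \<Rightarrow> 'p::prime_card config \<Rightarrow> 'p config \<Rightarrow> bool" where
  "search_reaches R L x \<equiv> reaches_within (step search_tm x) (heads_within R L)"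

lemmas step_simps = step_search_tm search_action_def tape_of_update_blank_beyond
  tape_of_update_same tape_of_update_same' tape_of_Suc tape_of_beyond

lemma copy_input_run:
  "search_reaches R (length x) x
     (conf 0 (0::'p::prime_card mod_ring) 0 0 0 0 0 0 (tape_of []) (tape_of []) (tape_of []) (tape_of []) [])
     (conf 4 0 0 (length x) 1 0 0 1 (tape_of []) (tape_of []) (tape_of []) (tape_of (map of_bool x)) [])"
proof -
  let ?C = "\<lambda>j. conf 2 (0::'p mod_ring) 0 j 1 0 0 (Suc j) (tape_of []) (tape_of []) (tape_of [])
      (tape_of (map of_bool (take j x))) []"
  let ?D = "\<lambda>j. conf 3 (0::'p mod_ring) 0 (length x) 1 0 0 j (tape_of []) (tape_of []) (tape_of [])
      (tape_of (map of_bool x)) []"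
  have "search_reaches R (length x) x
      (conf 0 0 0 0 0 0 0 0 (tape_of []) (tape_of []) (tape_of []) (tape_of []) []) (?C 0)"
    by (rule reaches_within_one) (simp_all add: step_simps)
  also have "search_reaches R (length x) x (?C 0) (?C (length x))"
  proof (rule reaches_within_iterate_up)
    fix j assume "0 \<le> j" "j < length x"
    then show "step search_tm x (?C j) = ?C (Suc j)"
      using tape_of_snoc[of "map of_bool (take j x)" "of_bool (x ! j)"]
      by (simp add: step_simps input_sym_def take_Suc_conv_app_nth)
  qed auto
  also have "search_reaches R (length x) x (?C (length x)) (?D (length x))"
    by (rule reaches_within_one) (simp_all add: step_simps input_sym_def)
  also have "search_reaches R (length x) x (?D (length x)) (?D 0)"
    by (rule reaches_within_iterate_down) (simp_all add: step_simps)
  also have "search_reaches R (length x) x (?D 0)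
      (conf 4 0 0 (length x) 1 0 0 1 (tape_of []) (tape_of []) (tape_of []) (tape_of (map of_bool x)) [])"
    by (rule reaches_within_one) (simp_all add: step_simps)
  finally show ?thesis .
qed

fun bin_value :: "'a::zero list \<Rightarrow> nat" where
  "bin_value [] = 0"
| "bin_value (a # as) = (if a = 0 then 0 else 1) + 2 * bin_value as"

lemma bin_value_nat_bits: "bin_value (map of_bool (nat_bits n) :: 'a::zero_neq_one list) = n"
proof (induction n rule: nat_bits.induct)
  case (1 n)
  show ?case
  proof (cases "n = 0")
    case False
    then have "nat_bits n = odd n # nat_bits (n div 2)" by simp
    with 1 False show ?thesis by (simp del: nat_bits.simps)
  qed simp
qed

lemma bin_value_decrement:
  "bin_value (replicate k 1 @ 0 # cs) + 1 = bin_value (replicate k (0::'a::zero_neq_one) @ 1 # cs)"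
  by (induction k) auto

lemma bin_value_eq_0: "set cs \<subseteq> {0, 1::'a::zero_neq_one} \<Longrightarrow> bin_value cs = 0 \<Longrightarrow> cs = replicate (length cs) 0"
  by (induction cs) (auto split: if_splits)

lemma bin_value_pos:
  "set cs \<subseteq> {0, 1::'a::zero_neq_one} \<Longrightarrow> bin_value cs > 0 \<Longrightarrow> \<exists>k cs'. cs = replicate k 0 @ 1 # cs'"
proof (induction cs)
  case (Cons a cs)
  show ?case
  proof (cases "a = 0")
    case True
    with Cons obtain k cs' where "cs = replicate k 0 @ 1 # cs'" by auto
    with True have "a # cs = replicate (Suc k) 0 @ 1 # cs'" by simp
    then show ?thesis by blast
  next
    case False
    then have "a # cs = replicate 0 0 @ 1 # cs" using Cons.prems by auto
    then show ?thesis by blast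
  qed
qed simp

lemma decrement_counter_run:
  fixes u v :: "'p::prime_card mod_ring"
  assumes cs: "cs = replicate k 0 @ 1 # cs'" and "m < R" and "length cs \<le> L"
  shows "search_reaches R L x
     (conf 4 u v I (Suc m) 0 0 1 (tape_of (replicate m 0)) T1 T2 (tape_of cs) os)
     (conf 4 u v I (Suc (Suc m)) 0 0 1 (tape_of (replicate (Suc m) 0)) T1 T2
        (tape_of (replicate k 1 @ 0 # cs')) os)"
proof -
  let ?C = "\<lambda>j. conf 4 u v I (Suc m) 0 0 (Suc j) (tape_of (replicate m 0)) T1 T2
      (tape_of (replicate j 1 @ replicate (k - j) 0 @ 1 # cs')) os"
  let ?D = "\<lambda>j. conf 5 u v I (Suc m) 0 0 j (tape_of (replicate m 0)) T1 T2
      (tape_of (replicate k 1 @ 0 # cs')) os"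
  have bounds: "k + Suc (length cs') \<le> L" using assms by simp
  have "conf 4 u v I (Suc m) 0 0 1 (tape_of (replicate m 0)) T1 T2 (tape_of cs) os = ?C 0"
    using cs by simp
  also have "search_reaches R L x (?C 0) (?C k)"
  proof (rule reaches_within_iterate_up)
    fix j assume "0 \<le> j" "j < k"
    then show "step search_tm x (?C j) = ?C (Suc j)"
      by (simp add: step_simps nth_append nth_replicate_prefix tape_of_update list_update_replicate_prefix)
  qed (use assms bounds in auto)
  also have "search_reaches R L x (?C k) (?D k)"
    by (rule reaches_within_one) (use assms bounds in \<open>simp_all add: step_simps nth_append tape_of_update list_update_append\<close>)
  also have "search_reaches R L x (?D k) (?D 0)"
    by (rule reaches_within_iterate_down) (use assms bounds in \<open>simp_all add: step_simps nth_append\<close>)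
  also have "search_reaches R L x (?D 0)
      (conf 4 u v I (Suc (Suc m)) 0 0 1 (tape_of (replicate (Suc m) 0)) T1 T2
        (tape_of (replicate k 1 @ 0 # cs')) os)"
    using tape_of_snoc[of "replicate m (0::'p mod_ring)" 0]
    by (intro reaches_within_one) (use assms in \<open>simp_all add: step_simps replicate_append_same\<close>)
  finally show ?thesis .
qed

lemma counter_exhausted_run:
  fixes u v :: "'p::prime_card mod_ring"
  assumes "h0 \<le> Suc R" and "k \<le> L"
  shows "search_reaches R L x (conf 4 u v I h0 0 0 1 T0 T1 T2 (tape_of (replicate k 0)) os)
     (conf 6 u v I h0 0 0 (Suc k) T0 T1 T2 (tape_of (replicate k 1)) os)"
proof -
  let ?C = "\<lambda>j. conf 4 u v I h0 0 0 (Suc j) T0 T1 T2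
      (tape_of (replicate j 1 @ replicate (k - j) 0 @ [])) os"
  have "search_reaches R L x (?C 0) (?C k)"
  proof (rule reaches_within_iterate_up)
    fix j assume "0 \<le> j" "j < k"
    then show "step search_tm x (?C j) = ?C (Suc j)"
      by (simp add: step_simps nth_append nth_replicate_prefix tape_of_update list_update_replicate_prefix
          del: append_Nil2)
  qed (use assms in auto)
  also have "search_reaches R L x (?C k) (conf 6 u v I h0 0 0 (Suc k) T0 T1 T2 (tape_of (replicate k 1)) os)"
    by (rule reaches_within_one) (use assms in \<open>simp_all add: step_simps\<close>)
  finally show ?thesis by simp
qed

lemma count_down_run:
  fixes u v :: "'p::prime_card mod_ring"
  assumes "set cs \<subseteq> {0, 1}" and "bin_value cs = n" and "m + n \<le> R" and "length cs \<le> L"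
  shows "search_reaches R L x (conf 4 u v I (Suc m) 0 0 1 (tape_of (replicate m 0)) T1 T2 (tape_of cs) os)
     (conf 6 u v I (Suc (m + n)) 0 0 (Suc (length cs)) (tape_of (replicate (m + n) 0)) T1 T2
        (tape_of (replicate (length cs) 1)) os)"
  using assms
proof (induction n arbitrary: cs m)
  case 0
  then obtain k where cs: "cs = replicate k 0" using bin_value_eq_0 by blast
  have "search_reaches R L x (conf 4 u v I (Suc m) 0 0 1 (tape_of (replicate m 0)) T1 T2
      (tape_of (replicate k 0)) os)
    (conf 6 u v I (Suc m) 0 0 (Suc k) (tape_of (replicate m 0)) T1 T2 (tape_of (replicate k 1)) os)"
    by (rule counter_exhausted_run) (use 0 cs in auto)
  then show ?case unfolding cs by simp
next
  case (Suc n)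
  then obtain k cs' where cs: "cs = replicate k 0 @ 1 # cs'" using bin_value_pos[of cs] by auto
  let ?cs = "replicate k 1 @ 0 # cs' :: 'p mod_ring list"
  have "search_reaches R L x (conf 4 u v I (Suc m) 0 0 1 (tape_of (replicate m 0)) T1 T2 (tape_of cs) os)
     (conf 4 u v I (Suc (Suc m)) 0 0 1 (tape_of (replicate (Suc m) 0)) T1 T2 (tape_of ?cs) os)"
    by (rule decrement_counter_run[OF cs]) (use Suc.prems in auto)
  also have "bin_value ?cs = n" using bin_value_decrement[of k cs'] Suc.prems(2) cs by simp
  then have "search_reaches R L x
      (conf 4 u v I (Suc (Suc m)) 0 0 1 (tape_of (replicate (Suc m) 0)) T1 T2 (tape_of ?cs) os)
      (conf 6 u v I (Suc (Suc m + n)) 0 0 (Suc (length ?cs)) (tape_of (replicate (Suc m + n) 0)) T1 T2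
        (tape_of (replicate (length ?cs) 1)) os)"
    using Suc.prems cs by (intro Suc.IH) auto
  finally show ?case using cs by simp
qed

lemma start_search_run:
  fixes u v :: "'p::prime_card mod_ring"
  assumes "R \<ge> 1" and "h3 \<le> Suc L"
  shows "search_reaches R L x (conf 6 u v I (Suc R) 0 0 h3 (tape_of (replicate R 0)) (tape_of []) (tape_of []) T3 os)
     (conf 10 u v I 0 0 0 h3 (tape_of (replicate R 0)) (tape_of [0]) (tape_of [0]) T3 os)"
proof -
  let ?C = "\<lambda>j. conf 7 u v I j 0 0 h3 (tape_of (replicate R 0)) (tape_of []) (tape_of []) T3 os"
  have "search_reaches R L x
      (conf 6 u v I (Suc R) 0 0 h3 (tape_of (replicate R 0)) (tape_of []) (tape_of []) T3 os) (?C R)"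
    by (rule reaches_within_one) (use assms in \<open>simp_all add: step_simps\<close>)
  also have "search_reaches R L x (?C R) (?C 0)"
    by (rule reaches_within_iterate_down) (use assms in \<open>simp_all add: step_simps\<close>)
  also have "search_reaches R L x (?C 0)
      (conf 8 u v I 0 1 1 h3 (tape_of (replicate R 0)) (tape_of []) (tape_of []) T3 os)"
    by (rule reaches_within_one) (use assms in \<open>simp_all add: step_simps\<close>)
  also have "search_reaches R L x \<dots>
      (conf 10 u v I 0 0 0 h3 (tape_of (replicate R 0)) (tape_of [0]) (tape_of [0]) T3 os)"
    using tape_of_snoc[of "[] :: 'p mod_ring list" 0]
    by (intro reaches_within_one) (use assms in \<open>simp_all add: step_simps\<close>)
  finally show ?thesis .
qed

lemma write_padded_one_run:
  fixes u v :: "'p::prime_card mod_ring"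
  assumes "length fs = R" "length gs = d" "length rs = d" "1 \<le> d" "d \<le> R" "h3 \<le> Suc L"
  shows "search_reaches R L x (conf 10 u v I 0 0 0 h3 (tape_of fs) (tape_of gs) (tape_of rs) T3 os)
     (conf 12 u v I (Suc d) (Suc d) (Suc d) h3 (tape_of fs) (tape_of gs) (tape_of (padded_one d)) T3 os)"
proof -
  let ?C = "\<lambda>j. conf 12 u v I (Suc j) (Suc j) (Suc j) h3 (tape_of fs) (tape_of gs)
      (tape_of (take j (padded_one d) @ drop j rs)) T3 os"
  have first: "(tape_of rs)(Suc 0 := Some 1) = tape_of (take 1 (padded_one d) @ drop 1 rs)"
    using assms tape_of_update[of 0 rs 1] by (cases rs) (simp_all add: padded_one_def)
  have "search_reaches R L x (conf 10 u v I 0 0 0 h3 (tape_of fs) (tape_of gs) (tape_of rs) T3 os)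
      (conf 11 u v I 1 1 1 h3 (tape_of fs) (tape_of gs) (tape_of rs) T3 os)"
    by (rule reaches_within_one) (use assms in \<open>simp_all add: step_simps\<close>)
  also have "search_reaches R L x \<dots> (?C 1)"
    by (rule reaches_within_one) (use assms in \<open>simp_all add: step_simps tape_of_inside first\<close>)
  also have "search_reaches R L x (?C 1) (?C d)"
  proof (rule reaches_within_iterate_up)
    fix j assume j: "1 \<le> j" "j < d"
    then have "(tape_of (take j (padded_one d) @ drop j rs))(Suc j := Some 0)
        = tape_of (take (Suc j) (padded_one d) @ drop (Suc j) rs)"
      using assms tape_of_update[of j "take j (padded_one d) @ drop j rs" 0]
        take_drop_update[of j "padded_one d" rs] by (simp add: padded_one_def)
    with j assms show "step search_tm x (?C j) = ?C (Suc j)" by (simp add: step_simps)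
  qed (use assms in auto)
  also have "?C d = conf 12 u v I (Suc d) (Suc d) (Suc d) h3 (tape_of fs) (tape_of gs)
      (tape_of (padded_one d)) T3 os"
    using assms by simp
  finally show ?thesis .
qed

lemma start_division_run:
  fixes u v :: "'p::prime_card mod_ring"
  assumes "length fs = R" "length gs = d" "length rs = d" "1 \<le> d" "d < R" "h3 \<le> Suc L"
  shows "search_reaches R L x (conf 10 u v I 0 0 0 h3 (tape_of fs) (tape_of gs) (tape_of rs) T3 os)
     (conf 14 u v I R (Suc d) (Suc d) h3 (tape_of fs) (tape_of gs) (tape_of (padded_one d)) T3 os)"
proof -
  let ?D = "\<lambda>j. conf 13 u v I j (Suc d) (Suc d) h3 (tape_of fs) (tape_of gs) (tape_of (padded_one d)) T3 os"
  have "search_reaches R L x (conf 10 u v I 0 0 0 h3 (tape_of fs) (tape_of gs) (tape_of rs) T3 os)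
      (conf 12 u v I (Suc d) (Suc d) (Suc d) h3 (tape_of fs) (tape_of gs) (tape_of (padded_one d)) T3 os)"
    using assms by (intro write_padded_one_run) simp_all
  also have "search_reaches R L x \<dots> (?D (Suc (Suc d)))"
    by (rule reaches_within_one) (use assms in \<open>simp_all add: step_simps\<close>)
  also have "search_reaches R L x (?D (Suc (Suc d))) (?D (Suc R))"
    by (rule reaches_within_iterate_up) (use assms in \<open>simp_all add: step_simps tape_of_inside\<close>)
  also have "search_reaches R L x (?D (Suc R))
      (conf 14 u v I R (Suc d) (Suc d) h3 (tape_of fs) (tape_of gs) (tape_of (padded_one d)) T3 os)"
    by (rule reaches_within_one) (use assms in \<open>simp_all add: step_simps\<close>)
  finally show ?thesis .
qed

lemma horner_step_run:
  fixes u v :: "'p::prime_card mod_ring"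
  assumes "length fs = R" "length gs = d" "length rs = d" "1 \<le> d" "d < R" "1 \<le> k" "k \<le> R"
    and "h3 \<le> Suc L"
  shows "search_reaches R L x (conf 14 u v I k (Suc d) (Suc d) h3 (tape_of fs) (tape_of gs) (tape_of rs) T3 os)
     (conf 14 (last rs) (last rs) I (k - 1) (Suc d) (Suc d) h3 (tape_of fs) (tape_of gs)
        (tape_of (horner_step (last rs) (fs ! (k - 1)) rs gs)) T3 os)"
proof -
  define a c where "a = fs ! (k - 1)" and "c = last rs"
  let ?H = "horner_step c a rs gs"
  have "rs \<noteq> []" using assms by auto
  then have c: "c = rs ! (d - 1)" using assms by (simp add: c_def last_conv_nth)
  let ?D = "\<lambda>j. conf 16 c a I k j j h3 (tape_of fs) (tape_of gs) (tape_of rs) T3 os"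
  let ?C = "\<lambda>j. conf 17 c ((a # rs) ! j) I k (Suc j) (Suc j) h3 (tape_of fs) (tape_of gs)
      (tape_of (take j ?H @ drop j rs)) T3 os"
  have "search_reaches R L x (conf 14 u v I k (Suc d) (Suc d) h3 (tape_of fs) (tape_of gs) (tape_of rs) T3 os)
      (conf 15 u a I k d d h3 (tape_of fs) (tape_of gs) (tape_of rs) T3 os)"
    by (rule reaches_within_one) (use assms in \<open>simp_all add: step_simps tape_of_inside a_def\<close>)
  also have "search_reaches R L x \<dots> (?D (d - 1))"
    by (rule reaches_within_one) (use assms in \<open>simp_all add: step_simps tape_of_inside c\<close>)
  also have "search_reaches R L x (?D (d - 1)) (?D 0)"
    by (rule reaches_within_iterate_down) (use assms in \<open>simp_all add: step_simps\<close>)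
  also have "search_reaches R L x (?D 0) (?C 0)"
    by (rule reaches_within_one) (use assms in \<open>simp_all add: step_simps\<close>)
  also have "search_reaches R L x (?C 0) (?C d)"
  proof (rule reaches_within_iterate_up)
    fix j assume j: "0 \<le> j" "j < d"
    then have "(tape_of (take j ?H @ drop j rs))(Suc j := Some ((a # rs) ! j - c * gs ! j))
        = tape_of (take (Suc j) ?H @ drop (Suc j) rs)"
      using assms tape_of_update[of j "take j ?H @ drop j rs" "?H ! j"] take_drop_update[of j ?H rs]
      by (simp add: nth_horner_step)
    moreover have "(take j ?H @ drop j rs) ! j = rs ! j" using j assms by (simp add: nth_append)
    ultimately show "step search_tm x (?C j) = ?C (Suc j)" using j assms by (simp add: step_simps)
  qed (use assms in auto)
  also have "search_reaches R L x (?C d)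
      (conf 14 c c I (k - 1) (Suc d) (Suc d) h3 (tape_of fs) (tape_of gs) (tape_of ?H) T3 os)"
    by (rule reaches_within_one) (use assms in \<open>simp_all add: step_simps c\<close>)
  finally show ?thesis unfolding a_def c_def .
qed

lemma horner_run:
  fixes u v :: "'p::prime_card mod_ring"
  assumes "length fs = R" "length gs = d" "1 \<le> d" "d < R" "h3 \<le> Suc L"
    and "k \<le> R" "length rs = d" "monic_poly gs dvd monic_poly (drop k fs) - Poly rs"
  shows "\<exists>u' v' rs'. length rs' = d \<and> monic_poly gs dvd monic_poly fs - Poly rs' \<and>
    search_reaches R L x (conf 14 u v I k (Suc d) (Suc d) h3 (tape_of fs) (tape_of gs) (tape_of rs) T3 os)
      (conf 14 u' v' I 0 (Suc d) (Suc d) h3 (tape_of fs) (tape_of gs) (tape_of rs') T3 os)"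
  using assms(6-)
proof (induction k arbitrary: rs u v)
  case 0
  then show ?case
    using assms(4,5) by (intro exI[of _ u] exI[of _ v] exI[of _ rs]) (simp add: reaches_within_refl)
next
  case (Suc k)
  let ?rs = "horner_step (last rs) (fs ! k) rs gs"
  have "gs \<noteq> []" using assms by auto
  have "monic_poly (drop k fs) = pCons (fs ! k) (monic_poly (drop (Suc k) fs))"
    using Suc.prems(1) assms(1) by (simp add: monic_poly_def Cons_nth_drop_Suc[symmetric])
  then have "monic_poly gs dvd monic_poly (drop k fs) - Poly ?rs"
    using horner_step_remainder[of rs gs] Suc.prems assms(2) \<open>gs \<noteq> []\<close> by simp
  then obtain u' v' rs' where "length rs' = d" "monic_poly gs dvd monic_poly fs - Poly rs'"
    "search_reaches R L x (conf 14 (last rs) (last rs) I k (Suc d) (Suc d) h3 (tape_of fs) (tape_of gs)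
        (tape_of ?rs) T3 os)
      (conf 14 u' v' I 0 (Suc d) (Suc d) h3 (tape_of fs) (tape_of gs) (tape_of rs') T3 os)"
    using Suc.IH[of ?rs "last rs" "last rs"] Suc.prems assms(1-5) by auto
  moreover have "search_reaches R L x
      (conf 14 u v I (Suc k) (Suc d) (Suc d) h3 (tape_of fs) (tape_of gs) (tape_of rs) T3 os)
      (conf 14 (last rs) (last rs) I k (Suc d) (Suc d) h3 (tape_of fs) (tape_of gs) (tape_of ?rs) T3 os)"
    using horner_step_run[of fs R gs d rs "Suc k" h3 L] Suc.prems assms(1-5) by simp
  ultimately show ?case by (blast intro: reaches_within_trans)
qed

lemma zero_remainder_run:
  fixes u v :: "'p::prime_card mod_ring"
  assumes "length gs = d" "length rs = d" "d < R" "h3 \<le> Suc L" and "\<forall>r\<in>set rs. r = 0"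
  shows "search_reaches R L x (conf 14 u v I 0 (Suc d) (Suc d) h3 (tape_of fs) (tape_of gs) (tape_of rs) T3 os)
     (conf 25 u v I 0 0 0 h3 (tape_of fs) (tape_of gs) (tape_of rs) T3 os)"
proof -
  let ?D = "\<lambda>j. conf 21 u v I 0 j j h3 (tape_of fs) (tape_of gs) (tape_of rs) T3 os"
  have "search_reaches R L x (conf 14 u v I 0 (Suc d) (Suc d) h3 (tape_of fs) (tape_of gs) (tape_of rs) T3 os)
      (conf 20 u v I 0 (Suc d) (Suc d) h3 (tape_of fs) (tape_of gs) (tape_of rs) T3 os)"
    by (rule reaches_within_one) (use assms in \<open>simp_all add: step_simps\<close>)
  also have "search_reaches R L x \<dots> (?D d)"
    by (rule reaches_within_one) (use assms in \<open>simp_all add: step_simps\<close>)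
  also have "search_reaches R L x (?D d) (?D 0)"
    by (rule reaches_within_iterate_down) (use assms in \<open>simp_all add: step_simps\<close>)
  also have "search_reaches R L x (?D 0) (conf 25 u v I 0 0 0 h3 (tape_of fs) (tape_of gs) (tape_of rs) T3 os)"
    by (rule reaches_within_one) (use assms in \<open>simp_all add: step_simps\<close>)
  finally show ?thesis .
qed

lemma nonzero_remainder_scan:
  fixes u v :: "'p::prime_card mod_ring"
  assumes "length gs = d" "length rs = d" "d < R" "h3 \<le> Suc L"
  shows "j \<le> d \<Longrightarrow> \<exists>i<j. rs ! i \<noteq> 0 \<Longrightarrow>
    search_reaches R L x (conf 21 u v I 0 j j h3 (tape_of fs) (tape_of gs) (tape_of rs) T3 os)
     (conf 23 u v I 0 1 1 h3 (tape_of fs) (tape_of gs) (tape_of rs) T3 os)"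
proof (induction j)
  case (Suc j)
  let ?D = "\<lambda>l j. conf l u v I 0 j j h3 (tape_of fs) (tape_of gs) (tape_of rs) T3 os"
  show ?case
  proof (cases "rs ! j = 0")
    case True
    then have "\<exists>i<j. rs ! i \<noteq> 0" using Suc.prems(2) less_Suc_eq by auto
    have "search_reaches R L x (?D 21 (Suc j)) (?D 21 j)"
      by (rule reaches_within_one) (use Suc.prems assms True in \<open>simp_all add: step_simps\<close>)
    also have "search_reaches R L x (?D 21 j) (?D 23 1)"
      using Suc.IH Suc.prems(1) \<open>\<exists>i<j. rs ! i \<noteq> 0\<close> by simp
    finally show ?thesis .
  next
    case False
    have "search_reaches R L x (?D 21 (Suc j)) (?D 22 (Suc j))"
      by (rule reaches_within_one) (use Suc.prems assms False in \<open>simp_all add: step_simps\<close>)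
    also have "search_reaches R L x (?D 22 (Suc j)) (?D 22 0)"
      by (rule reaches_within_iterate_down) (use Suc.prems assms in \<open>simp_all add: step_simps\<close>)
    also have "search_reaches R L x (?D 22 0) (?D 23 1)"
      by (rule reaches_within_one) (use assms in \<open>simp_all add: step_simps\<close>)
    finally show ?thesis .
  qed
qed simp

lemma nonzero_remainder_run:
  fixes u v :: "'p::prime_card mod_ring"
  assumes "length gs = d" "length rs = d" "d < R" "h3 \<le> Suc L" and "\<exists>r\<in>set rs. r \<noteq> 0"
  shows "search_reaches R L x (conf 14 u v I 0 (Suc d) (Suc d) h3 (tape_of fs) (tape_of gs) (tape_of rs) T3 os)
     (conf 23 u v I 0 1 1 h3 (tape_of fs) (tape_of gs) (tape_of rs) T3 os)"
proof -
  have "search_reaches R L x (conf 14 u v I 0 (Suc d) (Suc d) h3 (tape_of fs) (tape_of gs) (tape_of rs) T3 os)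
      (conf 20 u v I 0 (Suc d) (Suc d) h3 (tape_of fs) (tape_of gs) (tape_of rs) T3 os)"
    by (rule reaches_within_one) (use assms in \<open>simp_all add: step_simps\<close>)
  also have "search_reaches R L x \<dots> (conf 21 u v I 0 d d h3 (tape_of fs) (tape_of gs) (tape_of rs) T3 os)"
    by (rule reaches_within_one) (use assms in \<open>simp_all add: step_simps\<close>)
  also have "search_reaches R L x \<dots> (conf 23 u v I 0 1 1 h3 (tape_of fs) (tape_of gs) (tape_of rs) T3 os)"
    using assms by (intro nonzero_remainder_scan) (auto simp: in_set_conv_nth)
  finally show ?thesis .
qed

lemma rewind_divisor_run:
  fixes u v :: "'p::prime_card mod_ring"
  assumes "j \<le> Suc R" "h3 \<le> Suc L" "j \<le> length gs"
  shows "search_reaches R L x (conf 24 u v I 0 j j h3 T0 (tape_of gs) T2 T3 os)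
     (conf 10 u v I 0 0 0 h3 T0 (tape_of gs) T2 T3 os)"
proof -
  let ?D = "\<lambda>j. conf 24 u v I 0 j j h3 T0 (tape_of gs) T2 T3 os"
  have "search_reaches R L x (?D j) (?D 0)"
    by (rule reaches_within_iterate_down) (use assms in \<open>simp_all add: step_simps\<close>)
  also have "search_reaches R L x (?D 0) (conf 10 u v I 0 0 0 h3 T0 (tape_of gs) T2 T3 os)"
    by (rule reaches_within_one) (use assms in \<open>simp_all add: step_simps\<close>)
  finally show ?thesis .
qed

lemma next_divisor_carry_run:
  fixes u v :: "'p::prime_card mod_ring"
  assumes gs: "gs = replicate k (-1) @ c # cs" and "c + 1 \<noteq> 0" "length gs \<le> R" "h3 \<le> Suc L"
  shows "search_reaches R L x (conf 23 u v I 0 1 1 h3 T0 (tape_of gs) T2 T3 os)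
    (conf 10 u v I 0 0 0 h3 T0 (tape_of (list_succ gs)) T2 T3 os)"
proof -
  let ?C = "\<lambda>j. conf 23 u v I 0 (Suc j) (Suc j) h3 T0
      (tape_of (replicate j 0 @ replicate (k - j) (-1) @ c # cs)) T2 T3 os"
  let ?gs = "replicate k 0 @ (c + 1) # cs"
  have "conf 23 u v I 0 1 1 h3 T0 (tape_of gs) T2 T3 os = ?C 0" using gs by simp
  also have "search_reaches R L x (?C 0) (?C k)"
  proof (rule reaches_within_iterate_up)
    fix j assume "0 \<le> j" "j < k"
    then show "step search_tm x (?C j) = ?C (Suc j)"
      by (simp add: step_simps nth_append nth_replicate_prefix tape_of_update list_update_replicate_prefix)
  qed (use assms in auto)
  also have "search_reaches R L x (?C k) (conf 24 u v I 0 k k h3 T0 (tape_of ?gs) T2 T3 os)"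
    by (rule reaches_within_one) (use assms in \<open>simp_all add: step_simps nth_append tape_of_update list_update_append\<close>)
  also have "search_reaches R L x \<dots> (conf 10 u v I 0 0 0 h3 T0 (tape_of ?gs) T2 T3 os)"
    by (rule rewind_divisor_run) (use assms in auto)
  finally show ?thesis by (simp add: gs list_succ_carry[OF assms(2)])
qed

lemma next_divisor_overflow_run:
  fixes u v :: "'p::prime_card mod_ring"
  assumes gs: "gs = replicate k (-1)" and "length rs = k" "k < R" "h3 \<le> Suc L"
  shows "search_reaches R L x (conf 23 u v I 0 1 1 h3 T0 (tape_of gs) (tape_of rs) T3 os)
    (conf 10 u v I 0 0 0 h3 T0 (tape_of (list_succ gs)) (tape_of (rs @ [0])) T3 os)"
proof -
  let ?C = "\<lambda>j. conf 23 u v I 0 (Suc j) (Suc j) h3 T0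
      (tape_of (replicate j 0 @ replicate (k - j) (-1) @ [])) (tape_of rs) T3 os"
  have "conf 23 u v I 0 1 1 h3 T0 (tape_of gs) (tape_of rs) T3 os = ?C 0" using gs by simp
  also have "search_reaches R L x (?C 0) (?C k)"
  proof (rule reaches_within_iterate_up)
    fix j assume "0 \<le> j" "j < k"
    then show "step search_tm x (?C j) = ?C (Suc j)"
      by (simp add: step_simps nth_append nth_replicate_prefix tape_of_update list_update_replicate_prefix
          del: append_Nil2)
  qed (use assms in auto)
  also have "search_reaches R L x (?C k)
      (conf 24 u v I 0 k k h3 T0 (tape_of (replicate (Suc k) 0)) (tape_of (rs @ [0])) T3 os)"
    using tape_of_snoc[of "replicate k (0::'p mod_ring)" 0] tape_of_snoc[of rs 0]
    by (intro reaches_within_one) (use assms in \<open>simp_all add: step_simps replicate_append_same\<close>)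
  also have "search_reaches R L x \<dots>
      (conf 10 u v I 0 0 0 h3 T0 (tape_of (replicate (Suc k) 0)) (tape_of (rs @ [0])) T3 os)"
    by (rule rewind_divisor_run) (use assms in auto)
  finally show ?thesis by (simp add: gs list_succ_overflow)
qed

lemma next_divisor_run:
  fixes u v :: "'p::prime_card mod_ring"
  assumes "length gs < R" "length rs = length gs" "h3 \<le> Suc L"
  obtains rs' where "length rs' = length (list_succ gs)"
    "search_reaches R L x (conf 23 u v I 0 1 1 h3 T0 (tape_of gs) (tape_of rs) T3 os)
      (conf 10 u v I 0 0 0 h3 T0 (tape_of (list_succ gs)) (tape_of rs') T3 os)"
proof (cases gs rule: list_carry_split)
  case (1 k)
  then show ?thesis
    using that[of "rs @ [0]"] next_divisor_overflow_run[of gs k rs R h3 L] assms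
    by (simp add: list_succ_overflow)
next
  case (2 k c cs)
  then show ?thesis
    using that[of rs] next_divisor_carry_run[of gs k c cs R h3 L] assms
    by (simp add: list_succ_carry)
qed

lemma remainder_run:
  fixes u v :: "'p::prime_card mod_ring"
  assumes "length fs = R" "length gs = d" "length rs = d" "1 \<le> d" "d < R" "h3 \<le> Suc L"
  obtains u' v' rs' where "length rs' = d" "monic_poly gs dvd monic_poly fs \<longleftrightarrow> (\<forall>r\<in>set rs'. r = 0)"
    "search_reaches R L x (conf 10 u v I 0 0 0 h3 (tape_of fs) (tape_of gs) (tape_of rs) T3 os)
       (conf 14 u' v' I 0 (Suc d) (Suc d) h3 (tape_of fs) (tape_of gs) (tape_of rs') T3 os)"
proof -
  have start: "search_reaches R L x (conf 10 u v I 0 0 0 h3 (tape_of fs) (tape_of gs) (tape_of rs) T3 os)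
      (conf 14 u v I R (Suc d) (Suc d) h3 (tape_of fs) (tape_of gs) (tape_of (padded_one d)) T3 os)"
    by (rule start_division_run) (use assms in simp_all)
  have "monic_poly gs dvd monic_poly (drop R fs) - Poly (padded_one d)"
    using assms(1) by (simp add: monic_poly_def)
  then obtain u' v' rs' where "length rs' = d" "monic_poly gs dvd monic_poly fs - Poly rs'"
    "search_reaches R L x
      (conf 14 u v I R (Suc d) (Suc d) h3 (tape_of fs) (tape_of gs) (tape_of (padded_one d)) T3 os)
      (conf 14 u' v' I 0 (Suc d) (Suc d) h3 (tape_of fs) (tape_of gs) (tape_of rs') T3 os)"
    using horner_run[of fs R gs d h3 L R "padded_one d" x u v I T3 os] assms by auto
  note horner = this
  show ?thesis
  proof (rule that)
    show "monic_poly gs dvd monic_poly fs \<longleftrightarrow> (\<forall>r\<in>set rs'. r = 0)"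
      using horner(1,2) assms(2) by (intro monic_poly_dvd_iff_remainder_zero) simp_all
    show "search_reaches R L x (conf 10 u v I 0 0 0 h3 (tape_of fs) (tape_of gs) (tape_of rs) T3 os)
       (conf 14 u' v' I 0 (Suc d) (Suc d) h3 (tape_of fs) (tape_of gs) (tape_of rs') T3 os)"
      using start horner(3) by (rule reaches_within_trans)
  qed (use horner in simp)
qed

lemma trial_division_dvd_run:
  fixes u v :: "'p::prime_card mod_ring"
  assumes "length fs = R" "length gs = d" "length rs = d" "1 \<le> d" "d < R" "h3 \<le> Suc L"
    and "monic_poly gs dvd monic_poly fs"
  obtains u' v' rs' where "length rs' = d"
    "search_reaches R L x (conf 10 u v I 0 0 0 h3 (tape_of fs) (tape_of gs) (tape_of rs) T3 os)
       (conf 25 u' v' I 0 0 0 h3 (tape_of fs) (tape_of gs) (tape_of rs') T3 os)"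
proof -
  obtain u' v' rs' where rs': "length rs' = d" "monic_poly gs dvd monic_poly fs \<longleftrightarrow> (\<forall>r\<in>set rs'. r = 0)"
    "search_reaches R L x (conf 10 u v I 0 0 0 h3 (tape_of fs) (tape_of gs) (tape_of rs) T3 os)
       (conf 14 u' v' I 0 (Suc d) (Suc d) h3 (tape_of fs) (tape_of gs) (tape_of rs') T3 os)"
    by (rule remainder_run[OF assms(1-6)])
  note rs'(3)
  also have "search_reaches R L x
      (conf 14 u' v' I 0 (Suc d) (Suc d) h3 (tape_of fs) (tape_of gs) (tape_of rs') T3 os)
      (conf 25 u' v' I 0 0 0 h3 (tape_of fs) (tape_of gs) (tape_of rs') T3 os)"
    using assms rs'(1,2) by (intro zero_remainder_run) simp_all
  finally show ?thesis by (rule that[OF rs'(1)])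
qed

lemma trial_division_not_dvd_run:
  fixes u v :: "'p::prime_card mod_ring"
  assumes "length fs = R" "length gs = d" "length rs = d" "1 \<le> d" "d < R" "h3 \<le> Suc L"
    and "\<not> monic_poly gs dvd monic_poly fs"
  obtains u' v' rs' where "length rs' = length (list_succ gs)"
    "search_reaches R L x (conf 10 u v I 0 0 0 h3 (tape_of fs) (tape_of gs) (tape_of rs) T3 os)
       (conf 10 u' v' I 0 0 0 h3 (tape_of fs) (tape_of (list_succ gs)) (tape_of rs') T3 os)"
proof -
  obtain u' v' rs' where rs': "length rs' = d" "monic_poly gs dvd monic_poly fs \<longleftrightarrow> (\<forall>r\<in>set rs'. r = 0)"
    "search_reaches R L x (conf 10 u v I 0 0 0 h3 (tape_of fs) (tape_of gs) (tape_of rs) T3 os)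
       (conf 14 u' v' I 0 (Suc d) (Suc d) h3 (tape_of fs) (tape_of gs) (tape_of rs') T3 os)"
    by (rule remainder_run[OF assms(1-6)])
  have "length gs < R" "length rs' = length gs" using assms(2,5) rs'(1) by simp_all
  then obtain rs'' where rs'': "length rs'' = length (list_succ gs)"
    "search_reaches R L x (conf 23 u' v' I 0 1 1 h3 (tape_of fs) (tape_of gs) (tape_of rs') T3 os)
      (conf 10 u' v' I 0 0 0 h3 (tape_of fs) (tape_of (list_succ gs)) (tape_of rs'') T3 os)"
    by (rule next_divisor_run[OF _ _ assms(6)])
  note rs'(3)
  also have "search_reaches R L x
      (conf 14 u' v' I 0 (Suc d) (Suc d) h3 (tape_of fs) (tape_of gs) (tape_of rs') T3 os)
      (conf 23 u' v' I 0 1 1 h3 (tape_of fs) (tape_of gs) (tape_of rs') T3 os)"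
    using assms rs'(1,2) by (intro nonzero_remainder_run) auto
  also note rs''(2)
  finally show ?thesis by (rule that[OF rs''(1)])
qed

lemma divisor_exhausted_run:
  fixes u v :: "'p::prime_card mod_ring"
  assumes "length fs = R" "length gs = R" "length rs = R" "1 \<le> R" "h3 \<le> Suc L"
  shows "search_reaches R L x (conf 10 u v I 0 0 0 h3 (tape_of fs) (tape_of gs) (tape_of rs) T3 os)
     (conf 30 u v I (Suc R) (Suc R) (Suc R) h3 (tape_of fs) (tape_of gs) (tape_of (padded_one R)) T3 os)"
proof -
  have "search_reaches R L x (conf 10 u v I 0 0 0 h3 (tape_of fs) (tape_of gs) (tape_of rs) T3 os)
      (conf 12 u v I (Suc R) (Suc R) (Suc R) h3 (tape_of fs) (tape_of gs) (tape_of (padded_one R)) T3 os)"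
    by (rule write_padded_one_run) (use assms in simp_all)
  also have "search_reaches R L x \<dots>
      (conf 30 u v I (Suc R) (Suc R) (Suc R) h3 (tape_of fs) (tape_of gs) (tape_of (padded_one R)) T3 os)"
    by (rule reaches_within_one) (use assms in \<open>simp_all add: step_simps\<close>)
  finally show ?thesis .
qed

lemma divisor_search_irreducible_run:
  fixes u v :: "'p::prime_card mod_ring"
  assumes "length fs = R" "h3 \<le> Suc L"
    and irreducible: "\<And>ds. 1 \<le> length ds \<Longrightarrow> length ds < R \<Longrightarrow> \<not> monic_poly ds dvd monic_poly fs"
    and "1 \<le> length gs" "length gs \<le> R" "length rs = length gs"
  shows "\<exists>u' v' gs' rs'.
    search_reaches R L x (conf 10 u v I 0 0 0 h3 (tape_of fs) (tape_of gs) (tape_of rs) T3 os)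
      (conf 30 u' v' I (Suc R) (Suc R) (Suc R) h3 (tape_of fs) (tape_of gs') (tape_of rs') T3 os)"
  using assms(4-)
proof (induction "repunit CARD('p) R - list_rank gs" arbitrary: gs rs u v rule: less_induct)
  case less
  show ?case
  proof (cases "length gs = R")
    case True
    have "search_reaches R L x (conf 10 u v I 0 0 0 h3 (tape_of fs) (tape_of gs) (tape_of rs) T3 os)
      (conf 30 u v I (Suc R) (Suc R) (Suc R) h3 (tape_of fs) (tape_of gs) (tape_of (padded_one R)) T3 os)"
      by (rule divisor_exhausted_run) (use assms(1,2) less.prems True in auto)
    then show ?thesis by blast
  next
    case False
    then have "length gs < R" using less.prems by simp
    then obtain u' v' rs' where rs': "length rs' = length (list_succ gs)"
      "search_reaches R L x (conf 10 u v I 0 0 0 h3 (tape_of fs) (tape_of gs) (tape_of rs) T3 os)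
         (conf 10 u' v' I 0 0 0 h3 (tape_of fs) (tape_of (list_succ gs)) (tape_of rs') T3 os)"
      using trial_division_not_dvd_run[OF assms(1) refl less.prems(3) less.prems(1) _ assms(2)
          irreducible[OF less.prems(1)]] by blast
    have rank: "list_rank (list_succ gs) = Suc (list_rank gs)" "list_rank gs < repunit CARD('p) R"
      using list_rank_list_succ list_rank_less_repunit[OF \<open>length gs < R\<close>] by simp_all
    then have "length (list_succ gs) \<le> R"
      by (intro length_le_if_list_rank_le_repunit) simp
    moreover have "repunit CARD('p) R - list_rank (list_succ gs) < repunit CARD('p) R - list_rank gs"
      using rank by simp
    moreover have "1 \<le> length (list_succ gs)" using list_succ_nonempty[of gs] by (simp add: Suc_le_eq)
    ultimately obtain u'' v'' gs' rs'' where
      "search_reaches R L x (conf 10 u' v' I 0 0 0 h3 (tape_of fs) (tape_of (list_succ gs)) (tape_of rs') T3 os)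
        (conf 30 u'' v'' I (Suc R) (Suc R) (Suc R) h3 (tape_of fs) (tape_of gs') (tape_of rs'') T3 os)"
      using less.hyps[of "list_succ gs" rs' u' v'] rs'(1) by blast
    with rs'(2) have "search_reaches R L x
        (conf 10 u v I 0 0 0 h3 (tape_of fs) (tape_of gs) (tape_of rs) T3 os)
        (conf 30 u'' v'' I (Suc R) (Suc R) (Suc R) h3 (tape_of fs) (tape_of gs') (tape_of rs'') T3 os)"
      by (rule reaches_within_trans)
    then show ?thesis by blast
  qed
qed

lemma divisor_search_reducible_run:
  fixes u v :: "'p::prime_card mod_ring"
  assumes "length fs = R" "h3 \<le> Suc L"
    and "1 \<le> length ds" "length ds < R" "monic_poly ds dvd monic_poly fs"
    and "list_rank gs \<le> list_rank ds" "1 \<le> length gs" "length rs = length gs"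
  shows "\<exists>u' v' gs' rs'. length gs' \<le> R \<and> length rs' = length gs' \<and>
    search_reaches R L x (conf 10 u v I 0 0 0 h3 (tape_of fs) (tape_of gs) (tape_of rs) T3 os)
      (conf 25 u' v' I 0 0 0 h3 (tape_of fs) (tape_of gs') (tape_of rs') T3 os)"
  using assms(6-)
proof (induction "list_rank ds - list_rank gs" arbitrary: gs rs u v rule: less_induct)
  case less
  have "length gs < R" using length_le_if_list_rank_le[OF less.prems(1)] assms(4) by simp
  show ?case
  proof (cases "monic_poly gs dvd monic_poly fs")
    case True
    then obtain u' v' rs' where "length rs' = length gs"
      "search_reaches R L x (conf 10 u v I 0 0 0 h3 (tape_of fs) (tape_of gs) (tape_of rs) T3 os)
         (conf 25 u' v' I 0 0 0 h3 (tape_of fs) (tape_of gs) (tape_of rs') T3 os)"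
      by (rule trial_division_dvd_run[OF assms(1) refl less.prems(3) less.prems(2) \<open>length gs < R\<close> assms(2)])
    then show ?thesis
      using \<open>length gs < R\<close> by (intro exI[of _ u'] exI[of _ v'] exI[of _ gs] exI[of _ rs']) simp
  next
    case False
    obtain u' v' rs' where rs': "length rs' = length (list_succ gs)"
      "search_reaches R L x (conf 10 u v I 0 0 0 h3 (tape_of fs) (tape_of gs) (tape_of rs) T3 os)
         (conf 10 u' v' I 0 0 0 h3 (tape_of fs) (tape_of (list_succ gs)) (tape_of rs') T3 os)"
      by (rule trial_division_not_dvd_run[OF assms(1) refl less.prems(3) less.prems(2)
            \<open>length gs < R\<close> assms(2) False])
    have "list_rank gs \<noteq> list_rank ds" using False assms(5) list_rank_inj by blast
    then have "list_rank gs < list_rank ds" using less.prems(1) by simp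
    then have "list_rank ds - list_rank (list_succ gs) < list_rank ds - list_rank gs"
      "list_rank (list_succ gs) \<le> list_rank ds"
      by (simp_all add: list_rank_list_succ)
    moreover have "1 \<le> length (list_succ gs)" using list_succ_nonempty[of gs] by (simp add: Suc_le_eq)
    ultimately obtain u'' v'' gs' rs'' where "length gs' \<le> R" "length rs'' = length gs'"
      "search_reaches R L x
        (conf 10 u' v' I 0 0 0 h3 (tape_of fs) (tape_of (list_succ gs)) (tape_of rs') T3 os)
        (conf 25 u'' v'' I 0 0 0 h3 (tape_of fs) (tape_of gs') (tape_of rs'') T3 os)"
      using less.hyps[of "list_succ gs" rs' u' v'] rs'(1) by blast
    moreover note reaches_within_trans[OF rs'(2) this(3)]
    ultimately show ?thesis by blast
  qed
qed

lemma increment_candidate_run: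
  fixes u v :: "'p::prime_card mod_ring"
  assumes fs: "fs = replicate k (-1) @ c # cs" and "c + 1 \<noteq> 0" and "length fs = R" "h3 \<le> Suc L"
  shows "search_reaches R L x (conf 25 u v I 0 0 0 h3 (tape_of fs) T1 T2 T3 os)
    (conf 28 u v I 0 0 0 h3 (tape_of (list_succ fs)) T1 T2 T3 os)"
proof -
  let ?fs = "replicate k 0 @ (c + 1) # cs"
  let ?C = "\<lambda>j. conf 26 u v I (Suc j) 0 0 h3 (tape_of (replicate j 0 @ replicate (k - j) (-1) @ c # cs))
      T1 T2 T3 os"
  let ?D = "\<lambda>j. conf 27 u v I j 0 0 h3 (tape_of ?fs) T1 T2 T3 os"
  have "search_reaches R L x (conf 25 u v I 0 0 0 h3 (tape_of fs) T1 T2 T3 os) (?C 0)"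
    by (rule reaches_within_one) (use assms in \<open>simp_all add: step_simps\<close>)
  also have "search_reaches R L x (?C 0) (?C k)"
  proof (rule reaches_within_iterate_up)
    fix j assume "0 \<le> j" "j < k"
    then show "step search_tm x (?C j) = ?C (Suc j)"
      by (simp add: step_simps nth_append nth_replicate_prefix tape_of_update list_update_replicate_prefix)
  qed (use assms in auto)
  also have "search_reaches R L x (?C k) (?D k)"
    by (rule reaches_within_one)
      (use assms in \<open>simp_all add: step_simps nth_append tape_of_update list_update_append\<close>)
  also have "search_reaches R L x (?D k) (?D 0)"
    by (rule reaches_within_iterate_down) (use assms in \<open>simp_all add: step_simps nth_append\<close>)
  also have "search_reaches R L x (?D 0) (conf 28 u v I 0 0 0 h3 (tape_of ?fs) T1 T2 T3 os)"
    by (rule reaches_within_one) (use assms in \<open>simp_all add: step_simps\<close>)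
  finally show ?thesis by (simp add: fs list_succ_carry[OF assms(2)])
qed

lemma restart_divisor_run:
  fixes u v :: "'p::prime_card mod_ring"
  assumes "length gs = d" "length rs = d" "d \<le> R" "h3 \<le> Suc L"
  shows "search_reaches R L x (conf 28 u v I 0 0 0 h3 T0 (tape_of gs) (tape_of rs) T3 os)
    (conf 10 u v I 0 0 0 h3 T0 (tape_of [0]) (tape_of [0]) T3 os)"
proof -
  let ?E = "\<lambda>j. conf 29 u v I 0 j j h3 T0 (tape_of gs) (tape_of rs) T3 os"
  let ?G = "\<lambda>j. conf 31 u v I 0 j j h3 T0 (tape_of (take j gs)) (tape_of (take j rs)) T3 os"
  have "search_reaches R L x (conf 28 u v I 0 0 0 h3 T0 (tape_of gs) (tape_of rs) T3 os) (?E 1)"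
    by (rule reaches_within_one) (use assms in \<open>simp_all add: step_simps\<close>)
  also have "search_reaches R L x (?E 1) (?E (Suc d))"
    by (rule reaches_within_iterate_up) (use assms in \<open>simp_all add: step_simps tape_of_inside\<close>)
  also have "search_reaches R L x (?E (Suc d)) (?G d)"
    by (rule reaches_within_one) (use assms in \<open>simp_all add: step_simps\<close>)
  also have "search_reaches R L x (?G d) (?G 0)"
  proof (rule reaches_within_iterate_down)
    fix j assume j: "0 \<le> j" "j < d"
    then have "gs \<noteq> []" "rs \<noteq> []" using assms by auto
    then have "(tape_of (take (Suc j) gs))(Suc j := None) = tape_of (take j gs)"
      "(tape_of (take (Suc j) rs))(Suc j := None) = tape_of (take j rs)"
      using j assms tape_of_butlast[of "take (Suc j) gs"] tape_of_butlast[of "take (Suc j) rs"]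
      by (simp_all add: butlast_take)
    with j assms show "step search_tm x (?G (Suc j)) = ?G j" by (simp add: step_simps tape_of_inside)
  qed (use assms in auto)
  also have "search_reaches R L x (?G 0) (conf 8 u v I 0 1 1 h3 T0 (tape_of []) (tape_of []) T3 os)"
    by (rule reaches_within_one) (use assms in \<open>simp_all add: step_simps\<close>)
  also have "search_reaches R L x \<dots> (conf 10 u v I 0 0 0 h3 T0 (tape_of [0]) (tape_of [0]) T3 os)"
    using tape_of_snoc[of "[] :: 'p mod_ring list" 0]
    by (intro reaches_within_one) (use assms in \<open>simp_all add: step_simps\<close>)
  finally show ?thesis .
qed

lemma print_candidate_run:
  fixes u v :: "'p::prime_card mod_ring"
  assumes "length fs = R" "h3 \<le> Suc L"
  shows "search_reaches R L x (conf 30 u v I (Suc R) (Suc R) (Suc R) h3 (tape_of fs) T1 T2 T3 os)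
     (conf 1 0 0 I (Suc R) (Suc R) (Suc R) h3 (tape_of fs) T1 T2 T3 (os @ fs @ [1]))"
proof -
  let ?D = "\<lambda>j. conf 32 u v I j (Suc R) (Suc R) h3 (tape_of fs) T1 T2 T3 os"
  let ?C = "\<lambda>j. conf 33 u v I (Suc j) (Suc R) (Suc R) h3 (tape_of fs) T1 T2 T3 (os @ take j fs)"
  have "search_reaches R L x (conf 30 u v I (Suc R) (Suc R) (Suc R) h3 (tape_of fs) T1 T2 T3 os) (?D R)"
    by (rule reaches_within_one) (use assms in \<open>simp_all add: step_simps\<close>)
  also have "search_reaches R L x (?D R) (?D 0)"
    by (rule reaches_within_iterate_down) (use assms in \<open>simp_all add: step_simps\<close>)
  also have "search_reaches R L x (?D 0) (?C 0)"
    by (rule reaches_within_one) (use assms in \<open>simp_all add: step_simps\<close>)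
  also have "search_reaches R L x (?C 0) (?C R)"
    by (rule reaches_within_iterate_up) (use assms in \<open>simp_all add: step_simps take_Suc_conv_app_nth\<close>)
  also have "search_reaches R L x (?C R)
      (conf 1 0 0 I (Suc R) (Suc R) (Suc R) h3 (tape_of fs) T1 T2 T3 (os @ fs @ [1]))"
    by (rule reaches_within_one) (use assms in \<open>simp_all add: step_simps\<close>)
  finally show ?thesis .
qed

lemma reject_candidate_run:
  fixes u v :: "'p::prime_card mod_ring"
  assumes "1 \<le> R" "h3 \<le> Suc L" "length fs = R" "\<not> irreducible (monic_poly fs)"
    and "length (list_succ fs) \<le> R"
  obtains u' v' where "search_reaches R L x
      (conf 10 u v I 0 0 0 h3 (tape_of fs) (tape_of [0]) (tape_of [0]) T3 os)
      (conf 10 u' v' I 0 0 0 h3 (tape_of (list_succ fs)) (tape_of [0]) (tape_of [0]) T3 os)"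
proof -
  obtain ds where ds: "1 \<le> length ds" "length ds < R" "monic_poly ds dvd monic_poly fs"
    using not_irreducible_monic_poly_dvd[OF assms(4)] assms(1,3) by metis
  have "list_rank [0::'p mod_ring] = repunit CARD('p) 1" by simp
  also have "\<dots> \<le> repunit CARD('p) (length ds)" using ds(1) by (intro repunit_mono) simp_all
  also have "\<dots> \<le> list_rank ds" using list_rank_bounds[of ds] by simp
  finally have rank: "list_rank [0::'p mod_ring] \<le> list_rank ds" .
  have "\<exists>u' v' gs rs. length gs \<le> R \<and> length rs = length gs \<and>
    search_reaches R L x (conf 10 u v I 0 0 0 h3 (tape_of fs) (tape_of [0]) (tape_of [0]) T3 os)
      (conf 25 u' v' I 0 0 0 h3 (tape_of fs) (tape_of gs) (tape_of rs) T3 os)"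
    by (rule divisor_search_reducible_run[OF assms(3,2) ds rank]) simp_all
  then obtain u' v' gs rs where divisor: "length gs \<le> R" "length rs = length gs"
    "search_reaches R L x (conf 10 u v I 0 0 0 h3 (tape_of fs) (tape_of [0]) (tape_of [0]) T3 os)
      (conf 25 u' v' I 0 0 0 h3 (tape_of fs) (tape_of gs) (tape_of rs) T3 os)"
    by blast
  show ?thesis
  proof (cases fs rule: list_carry_split)
    case (1 k)
    then show ?thesis using assms(3,5) by (simp add: list_succ_overflow)
  next
    case (2 k c cs)
    note divisor(3)
    also have "search_reaches R L x (conf 25 u' v' I 0 0 0 h3 (tape_of fs) (tape_of gs) (tape_of rs) T3 os)
        (conf 28 u' v' I 0 0 0 h3 (tape_of (list_succ fs)) (tape_of gs) (tape_of rs) T3 os)"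
      by (rule increment_candidate_run[OF 2 assms(3,2)])
    also have "search_reaches R L x \<dots>
        (conf 10 u' v' I 0 0 0 h3 (tape_of (list_succ fs)) (tape_of [0]) (tape_of [0]) T3 os)"
      by (rule restart_divisor_run[of gs "length gs" rs]) (use divisor assms in simp_all)
    finally show ?thesis by (rule that)
  qed
qed

lemma candidate_search_run:
  fixes u v :: "'p::prime_card mod_ring" and ft :: "'p mod_ring list"
  assumes "1 \<le> R" "h3 \<le> Suc L" "length ft = R" "irreducible (monic_poly ft)"
    and "list_rank fs \<le> list_rank ft" "length fs = R"
  shows "\<exists>fs' u' v' gs' rs'. length fs' = R \<and> irreducible (monic_poly fs') \<and>
    search_reaches R L x (conf 10 u v I 0 0 0 h3 (tape_of fs) (tape_of [0]) (tape_of [0]) T3 os)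
      (conf 30 u' v' I (Suc R) (Suc R) (Suc R) h3 (tape_of fs') (tape_of gs') (tape_of rs') T3 os)"
  using assms(5,6)
proof (induction "list_rank ft - list_rank fs" arbitrary: fs u v rule: less_induct)
  case less
  show ?case
  proof (cases "irreducible (monic_poly fs)")
    case True
    then have no_factor: "\<not> monic_poly ds dvd monic_poly fs" if "1 \<le> length ds" "length ds < R" for ds
      using irreducible_monic_poly_not_dvd that less.prems(2) by blast
    have "\<exists>u' v' gs' rs'.
      search_reaches R L x (conf 10 u v I 0 0 0 h3 (tape_of fs) (tape_of [0]) (tape_of [0]) T3 os)
        (conf 30 u' v' I (Suc R) (Suc R) (Suc R) h3 (tape_of fs) (tape_of gs') (tape_of rs') T3 os)"
      by (rule divisor_search_irreducible_run[OF less.prems(2) assms(2) no_factor]) (use assms(1) in simp_all)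
    then show ?thesis using True less.prems(2) by blast
  next
    case False
    have "fs \<noteq> ft" using False assms(4) by auto
    then have "list_rank fs \<noteq> list_rank ft" by (metis list_rank_inj)
    then have "list_rank fs < list_rank ft" using less.prems(1) by simp
    then have rank: "list_rank ft - list_rank (list_succ fs) < list_rank ft - list_rank fs"
      "list_rank (list_succ fs) \<le> list_rank ft"
      by (simp_all add: list_rank_list_succ)
    then have "length (list_succ fs) \<le> R" using length_le_if_list_rank_le assms(3) by metis
    then obtain u' v' where reject: "search_reaches R L x
        (conf 10 u v I 0 0 0 h3 (tape_of fs) (tape_of [0]) (tape_of [0]) T3 os)
        (conf 10 u' v' I 0 0 0 h3 (tape_of (list_succ fs)) (tape_of [0]) (tape_of [0]) T3 os)"
      by (rule reject_candidate_run[OF assms(1,2) less.prems(2) False])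
    have "length (list_succ fs) = R"
      using \<open>length (list_succ fs) \<le> R\<close> less.prems(2) by (cases fs rule: list_carry_split)
        (simp_all add: list_succ_overflow list_succ_carry)
    then obtain fs' u'' v'' gs' rs' where fs': "length fs' = R" "irreducible (monic_poly fs')"
      "search_reaches R L x
        (conf 10 u' v' I 0 0 0 h3 (tape_of (list_succ fs)) (tape_of [0]) (tape_of [0]) T3 os)
        (conf 30 u'' v'' I (Suc R) (Suc R) (Suc R) h3 (tape_of fs') (tape_of gs') (tape_of rs') T3 os)"
      using less.hyps[OF rank, of u' v'] by blast
    from reject fs'(3) have "search_reaches R L x
        (conf 10 u v I 0 0 0 h3 (tape_of fs) (tape_of [0]) (tape_of [0]) T3 os)
        (conf 30 u'' v'' I (Suc R) (Suc R) (Suc R) h3 (tape_of fs') (tape_of gs') (tape_of rs') T3 os)"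
      by (rule reaches_within_trans)
    then show ?thesis using fs'(1,2) by blast
  qed
qed

declare nat_bits.simps [simp del]

lemma init_config_search_tm:
  "init_config (search_tm :: 'p::prime_card tm) =
     conf 0 0 0 0 0 0 0 0 (tape_of []) (tape_of []) (tape_of []) (tape_of []) []"
  unfolding init_config_def search_tm_def by (simp add: state_code_def numeral_eq_Suc tape_of_Nil)

lemma read_degree_run:
  assumes "R \<ge> 1"
  defines "x \<equiv> nat_bits R" and "L \<equiv> length (nat_bits R)"
  shows "search_reaches R L x (init_config search_tm)
    (conf 10 (0::'p::prime_card mod_ring) 0 L 0 0 0 (Suc L) (tape_of (replicate R 0)) (tape_of [0])
      (tape_of [0]) (tape_of (replicate L 1)) [])"
proof -
  have "search_reaches R L x (init_config search_tm)
      (conf 4 (0::'p mod_ring) 0 L 1 0 0 1 (tape_of []) (tape_of []) (tape_of []) (tape_of (map of_bool x)) [])"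
    unfolding init_config_search_tm L_def x_def by (rule copy_input_run)
  also have "search_reaches R L x \<dots>
      (conf 6 0 0 L (Suc R) 0 0 (Suc L) (tape_of (replicate R 0)) (tape_of []) (tape_of [])
        (tape_of (replicate L 1)) [])"
    using count_down_run[of "map of_bool x" R 0 R L x "0::'p mod_ring" 0 L "tape_of []" "tape_of []" "[]"]
    by (simp add: L_def x_def bin_value_nat_bits image_subset_iff)
  also have "search_reaches R L x \<dots>
      (conf 10 0 0 L 0 0 0 (Suc L) (tape_of (replicate R 0)) (tape_of [0]) (tape_of [0])
        (tape_of (replicate L 1)) [])"
    by (rule start_search_run) (use assms in simp_all)
  finally show ?thesis .
qed

lemma search_tm_run:
  assumes "R \<ge> 1"
  obtains fs :: "'p::prime_card mod_ring list" and t
  where "length fs = R" "irreducible (monic_poly fs)"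
    "cstate (run (search_tm :: 'p tm) (nat_bits R) t) = 1"
    "outp (run (search_tm :: 'p tm) (nat_bits R) t) = fs @ [1]"
    "\<forall>s\<le>t. heads_within R (length (nat_bits R)) (run (search_tm :: 'p tm) (nat_bits R) s)"
proof -
  define x where "x = nat_bits R"
  define L where "L = length x"
  obtain ft :: "'p mod_ring list" where ft: "length ft = R" "irreducible (monic_poly ft)"
    using exists_irreducible_monic_poly[of R] assms by auto
  have rank: "list_rank (replicate R (0::'p mod_ring)) \<le> list_rank ft"
    using list_rank_bounds[of ft] ft(1) by (simp add: list_rank_replicate_0)
  have "\<exists>fs u v gs rs. length fs = R \<and> irreducible (monic_poly fs) \<and>
    search_reaches R L x
      (conf 10 (0::'p mod_ring) 0 L 0 0 0 (Suc L) (tape_of (replicate R 0)) (tape_of [0]) (tape_of [0])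
        (tape_of (replicate L 1)) [])
      (conf 30 u v L (Suc R) (Suc R) (Suc R) (Suc L) (tape_of fs) (tape_of gs) (tape_of rs)
        (tape_of (replicate L 1)) [])"
    by (rule candidate_search_run[OF assms _ ft]) (simp_all add: rank)
  then obtain fs u v gs rs where fs: "length fs = R" "irreducible (monic_poly fs)"
    "search_reaches R L x
      (conf 10 (0::'p mod_ring) 0 L 0 0 0 (Suc L) (tape_of (replicate R 0)) (tape_of [0]) (tape_of [0])
        (tape_of (replicate L 1)) [])
      (conf 30 u v L (Suc R) (Suc R) (Suc R) (Suc L) (tape_of fs) (tape_of gs) (tape_of rs)
        (tape_of (replicate L 1)) [])"
    by blast
  have "search_reaches R L x (init_config search_tm)
      (conf 10 (0::'p mod_ring) 0 L 0 0 0 (Suc L) (tape_of (replicate R 0)) (tape_of [0]) (tape_of [0])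
        (tape_of (replicate L 1)) [])"
    unfolding x_def L_def using assms by (rule read_degree_run)
  also note fs(3)
  also have "search_reaches R L x
      (conf 30 u v L (Suc R) (Suc R) (Suc R) (Suc L) (tape_of fs) (tape_of gs) (tape_of rs)
        (tape_of (replicate L 1)) [])
      (conf 1 0 0 L (Suc R) (Suc R) (Suc R) (Suc L) (tape_of fs) (tape_of gs) (tape_of rs)
        (tape_of (replicate L 1)) ([] @ fs @ [1]))"
    by (rule print_candidate_run) (simp_all add: fs(1))
  finally obtain t where t: "run search_tm x t =
      conf 1 0 0 L (Suc R) (Suc R) (Suc R) (Suc L) (tape_of fs) (tape_of gs) (tape_of rs)
        (tape_of (replicate L 1)) ([] @ fs @ [1])"
    "\<forall>s\<le>t. heads_within R L (run (search_tm :: 'p tm) x s)"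
    by (rule run_if_reaches_within)
  have "cstate (run (search_tm :: 'p tm) x t) = 1" "outp (run (search_tm :: 'p tm) x t) = fs @ [1]"
    unfolding t(1) by (simp_all add: state_code_def)
  then show ?thesis using t(2) unfolding x_def L_def by (rule that[OF fs(1,2)])
qed

lemma space_used_search_tm:
  assumes "\<forall>s\<le>t. heads_within R L (run (search_tm :: 'p::prime_card tm) x s)"
  shows "space_used (search_tm :: 'p tm) x t \<le> 3 * R + L + 8"
proof -
  define bound :: "nat \<Rightarrow> nat" where "bound i = (if i = 3 then L + 2 else R + 2)" for i
  have max_bound: "Max {Suc (heads (run (search_tm :: 'p tm) x t') ! i) | t'. t' \<le> t} \<le> bound i"
    if "i < 4" for i
  proof (rule Max.boundedI)
    have "{Suc (heads (run (search_tm :: 'p tm) x t') ! i) | t'. t' \<le> t}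
        = (\<lambda>t'. Suc (heads (run (search_tm :: 'p tm) x t') ! i)) ` {..t}"
      by auto
    then show "finite {Suc (heads (run (search_tm :: 'p tm) x t') ! i) | t'. t' \<le> t}" by simp
    show "{Suc (heads (run (search_tm :: 'p tm) x t') ! i) | t'. t' \<le> t} \<noteq> {}" by auto
  next
    fix a assume "a \<in> {Suc (heads (run (search_tm :: 'p tm) x t') ! i) | t'. t' \<le> t}"
    then obtain t' where "t' \<le> t" "a = Suc (heads (run (search_tm :: 'p tm) x t') ! i)" by auto
    moreover have "i = 0 \<or> i = 1 \<or> i = 2 \<or> i = 3" using that by auto
    ultimately show "a \<le> bound i" using assms unfolding heads_within_def bound_def by auto
  qed
  have ntapes: "ntapes (search_tm :: 'p tm) = 4" by (simp add: search_tm_def)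
  have "space_used (search_tm :: 'p tm) x t \<le> (\<Sum>i<4. bound i)"
    unfolding space_used_def ntapes by (intro sum_mono max_bound) simp
  also have "(\<Sum>i<4. bound i) = 3 * R + L + 8" by (simp add: bound_def numeral_eq_Suc)
  finally show ?thesis .
qed

lemma two_power_length_nat_bits: "n \<ge> 1 \<Longrightarrow> 2 ^ length (nat_bits n) \<le> 2 * n"
proof (induction n rule: less_induct)
  case (less n)
  then have bits: "nat_bits n = odd n # nat_bits (n div 2)" by (simp add: nat_bits.simps)
  show ?case
  proof (cases "n div 2 = 0")
    case True
    then show ?thesis using bits less.prems by (simp add: nat_bits.simps)
  next
    case False
    then have "2 ^ length (nat_bits (n div 2)) \<le> 2 * (n div 2)" using less.prems by (intro less.IH) auto
    then show ?thesis using bits by simp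
  qed
qed

lemma length_nat_bits_le_log: "n \<ge> 1 \<Longrightarrow> real (length (nat_bits n)) \<le> 1 + log 2 (real n)"
proof -
  assume "n \<ge> 1"
  have "real (length (nat_bits n)) = log 2 (2 ^ length (nat_bits n))" by (simp add: log_pow_cancel)
  also have "\<dots> \<le> log 2 (2 * real n)"
  proof (rule log_mono)
    show "(2::real) ^ length (nat_bits n) \<le> 2 * real n"
      using two_power_length_nat_bits[OF \<open>n \<ge> 1\<close>]
      by (metis of_nat_le_iff of_nat_mult of_nat_numeral of_nat_power)
  qed simp_all
  also have "\<dots> = 1 + log 2 (real n)" using \<open>n \<ge> 1\<close> by (simp add: log_mult)
  finally show ?thesis .
qed

lemma search_tm_computes_irreducible:
  assumes "R \<ge> 1"
  shows "\<exists>f :: 'p::prime_card mod_ring poly. irreducible f \<and> degree f = R \<and>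
    computes_in_space search_tm (nat_bits R) (coeffs f) (3 * real R + 9 * log 2 (real R) + 9)"
proof -
  obtain fs :: "'p mod_ring list" and t where fs: "length fs = R" "irreducible (monic_poly fs)"
    "cstate (run (search_tm :: 'p tm) (nat_bits R) t) = 1"
    "outp (run (search_tm :: 'p tm) (nat_bits R) t) = fs @ [1]"
    "\<forall>s\<le>t. heads_within R (length (nat_bits R)) (run (search_tm :: 'p tm) (nat_bits R) s)"
    using assms by (rule search_tm_run)
  have log_nonneg: "0 \<le> log 2 (real R)" using assms by simp
  have "space_used (search_tm :: 'p tm) (nat_bits R) t \<le> 3 * R + length (nat_bits R) + 8"
    by (rule space_used_search_tm[OF fs(5)])
  then have "real (space_used (search_tm :: 'p tm) (nat_bits R) t) \<le> real (3 * R + length (nat_bits R) + 8)"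
    by (rule of_nat_mono)
  also have "\<dots> = 3 * real R + real (length (nat_bits R)) + 8" by simp
  also have "\<dots> \<le> 3 * real R + 9 * log 2 (real R) + 9"
    using length_nat_bits_le_log[OF assms] log_nonneg by linarith
  finally have "computes_in_space search_tm (nat_bits R) (coeffs (monic_poly fs))
      (3 * real R + 9 * log 2 (real R) + 9)"
    unfolding computes_in_space_def coeffs_monic_poly using fs(3,4) by blast
  then show ?thesis using fs(1,2) by (intro exI[of _ "monic_poly fs"]) simp
qed

theorem lemmaB5:
  fixes r :: "nat \<Rightarrow> nat"
  assumes "\<And>n. r n > 0"
  shows "\<exists>(M :: ('p::prime_card) tm) (C :: real). wf_tm M \<and>
           (\<forall>n. \<exists>f :: 'p mod_ring poly.
                  irreducible f \<and> degree f = r n \<and>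
                  computes_in_space M (nat_bits (r n)) (coeffs f)
                    (3 * real (r n) + C * log 2 (real (r n)) + C))"
proof -
  have "\<exists>f :: 'p mod_ring poly. irreducible f \<and> degree f = r n \<and>
      computes_in_space search_tm (nat_bits (r n)) (coeffs f) (3 * real (r n) + 9 * log 2 (real (r n)) + 9)"
    for n
    using assms[of n] by (intro search_tm_computes_irreducible) simp
  then show ?thesis using wf_search_tm by blast
qed

end
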